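(* Let $s \geqslant 1/2$, $\varkappa>0$, $T>0$, and let $(\eta,v) \in C([0,T]; H^{s+1/2}(\mathbb{R})\times H^s(\mathbb{R}))$ be a solution of \[ \partial_t \eta = -\partial_x v - i \tanh D(\eta v), \qquad \partial_t v = -i \tanh D (1+\varkappa D^2)\eta - i \tanh D (v^2/2). \] If in addition $\eta$ satisfies the non-cavitation condition (there exist $h,H>0$ such that $H \geqslant \eta \geqslant h-1$ on $\mathbb{R}\times[0,T]$), then $E^s(\eta,v) \sim \|(\eta,v)\|^2_{H^{s+1/2}_\varkappa\times H^s}$ on $[0,T]$, i.e. there are constants $c, C>0$ with $c\|(\eta,v)\|^2_{H^{s+1/2}_\varkappa\times H^s} \leqslant E^s(\eta,v) \leqslant C\|(\eta,v)\|^2_{H^{s+1/2}_\varkappa\times H^s}$ for all $t\in[0,T]$.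
   Context: $D=-i\partial_x$; $\varphi(D)$ is the Fourier multiplier with symbol $\varphi(\xi)$. $J^\sigma$ has symbol $(1+\xi^2)^{\sigma/2}$, $H^\sigma$ has norm $\|J^\sigma f\|_{L^2}$. $K$ has symbol $\sqrt{\tanh\xi/\xi}$. $\|(\eta,v)\|^2_{H^{s+1/2}_\varkappa\times H^s} = \varkappa\|\partial_x\eta\|^2_{H^{s-1/2}} + \|\eta\|^2_{H^{s-1/2}} + \|K^{-1}v\|^2_{H^{s-1/2}}$ and $E^s(\eta,v) = \frac12\|(\eta,v)\|^2_{H^{s+1/2}_\varkappa\times H^s} + \frac12\int \eta\,(J^{s-1/2}v)^2\,dx$. *)

theory Defs
  imports "HOL-Analysis.Analysis"
begin

text \<open>Spatial functions are complex valued, real ones are embedded via cx.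
  Fourier convention: FT1 f xi = integral of f x * exp(-i x xi) dx, so that
  D = -i d/dx has symbol xi and Plancherel reads norm f^2 = (1/2pi) norm (FT f)^2.\<close>

definition cx :: "(real \<Rightarrow> real) \<Rightarrow> real \<Rightarrow> complex" where
  "cx f = (\<lambda>x. complex_of_real (f x))"

definition L2 :: "(real \<Rightarrow> complex) \<Rightarrow> bool" where
  "L2 f \<longleftrightarrow> f \<in> borel_measurable lborel \<and> integrable lborel (\<lambda>x. (cmod (f x))^2)"

definition FT1 :: "(real \<Rightarrow> complex) \<Rightarrow> real \<Rightarrow> complex" where
  "FT1 f \<xi> = (\<integral>x. f x * exp (- \<i> * complex_of_real (x * \<xi>)) \<partial>lborel)"

text \<open>F is the (L2) Fourier transform of f: F is square integrable and
  the weak Parseval identity holds against all phi in L1 and L2.\<close>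
definition is_FT :: "(real \<Rightarrow> complex) \<Rightarrow> (real \<Rightarrow> complex) \<Rightarrow> bool" where
  "is_FT f F \<longleftrightarrow> L2 F \<and>
     (\<forall>\<phi>. integrable lborel \<phi> \<and> L2 \<phi> \<longrightarrow>
        (\<integral>x. f x * FT1 \<phi> x \<partial>lborel) = (\<integral>\<xi>. F \<xi> * \<phi> \<xi> \<partial>lborel))"

definition FT :: "(real \<Rightarrow> complex) \<Rightarrow> real \<Rightarrow> complex" where
  "FT f = (SOME F. is_FT f F)"

definition fmult :: "(real \<Rightarrow> complex) \<Rightarrow> (real \<Rightarrow> complex) \<Rightarrow> real \<Rightarrow> complex" where
  "fmult m f = (SOME g. L2 g \<and> is_FT g (\<lambda>\<xi>. m \<xi> * FT f \<xi>))"

definition in_Hs :: "real \<Rightarrow> (real \<Rightarrow> complex) \<Rightarrow> bool" where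
  "in_Hs \<sigma> f \<longleftrightarrow> L2 f \<and>
     integrable lborel (\<lambda>\<xi>. (1 + \<xi>^2) powr \<sigma> * (cmod (FT f \<xi>))^2)"

definition Hs_norm :: "real \<Rightarrow> (real \<Rightarrow> complex) \<Rightarrow> real" where
  "Hs_norm \<sigma> f = sqrt ((1 / (2 * pi)) *
     (\<integral>\<xi>. (1 + \<xi>^2) powr \<sigma> * (cmod (FT f \<xi>))^2 \<partial>lborel))"

definition J_symb :: "real \<Rightarrow> real \<Rightarrow> complex" where
  "J_symb \<sigma> \<xi> = complex_of_real ((1 + \<xi>^2) powr (\<sigma> / 2))"

definition dx_symb :: "real \<Rightarrow> complex" where
  "dx_symb \<xi> = \<i> * complex_of_real \<xi>"

definition K_symb :: "real \<Rightarrow> real" where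
  "K_symb \<xi> = (if \<xi> = 0 then 1 else sqrt (tanh \<xi> / \<xi>))"

definition Kinv_symb :: "real \<Rightarrow> complex" where
  "Kinv_symb \<xi> = complex_of_real (1 / K_symb \<xi>)"

text \<open>Squared norm in H^{s+1/2}_kappa x H^s.\<close>
definition energy_norm2 :: "real \<Rightarrow> real \<Rightarrow> (real \<Rightarrow> real) \<Rightarrow> (real \<Rightarrow> real) \<Rightarrow> real" where
  "energy_norm2 s \<kappa> \<eta> v =
     \<kappa> * (Hs_norm (s - 1/2) (fmult dx_symb (cx \<eta>)))^2
     + (Hs_norm (s - 1/2) (cx \<eta>))^2
     + (Hs_norm (s - 1/2) (fmult Kinv_symb (cx v)))^2"

text \<open>E^s(eta,v); J^{s-1/2} v is real valued (even real symbol), we take its real part.\<close>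
definition Es :: "real \<Rightarrow> real \<Rightarrow> (real \<Rightarrow> real) \<Rightarrow> (real \<Rightarrow> real) \<Rightarrow> real" where
  "Es s \<kappa> \<eta> v = (1/2) * energy_norm2 s \<kappa> \<eta> v
     + (1/2) * (\<integral>x. \<eta> x * (Re (fmult (J_symb (s - 1/2)) (cx v) x))^2 \<partial>lborel)"

definition ftest :: "(real \<Rightarrow> complex) \<Rightarrow> bool" where
  "ftest \<phi> \<longleftrightarrow> \<phi> \<in> borel_measurable lborel \<and>
     (\<exists>R B. \<forall>\<xi>. cmod (\<phi> \<xi>) \<le> B \<and> (\<bar>\<xi>\<bar> > R \<longrightarrow> \<phi> \<xi> = 0))"

definition fpair :: "(real \<Rightarrow> complex) \<Rightarrow> (real \<Rightarrow> complex) \<Rightarrow> complex" where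
  "fpair F \<phi> = (\<integral>\<xi>. F \<xi> * \<phi> \<xi> \<partial>lborel)"

definition cont_Hs :: "real \<Rightarrow> real \<Rightarrow> (real \<Rightarrow> real \<Rightarrow> real) \<Rightarrow> bool" where
  "cont_Hs \<sigma> T u \<longleftrightarrow> (\<forall>t\<in>{0..T}. in_Hs \<sigma> (cx (u t))) \<and>
     (\<forall>t\<in>{0..T}. ((\<lambda>t'. Hs_norm \<sigma> (\<lambda>x. cx (u t') x - cx (u t) x)) \<longlongrightarrow> 0)
                    (at t within {0..T}))"

text \<open>Solution of
  d_t eta = - d_x v - i tanh D (eta v),
  d_t v   = - i tanh D (1 + kappa D^2) eta - i tanh D (v^2/2)
  on [0,T], in the weak sense on the Fourier side: for every Fourier test
  function phi the pairings of the Fourier transforms are differentiable in t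
  (one-sided at endpoints) with the derivative given by the equations.\<close>
definition ww_solution :: "real \<Rightarrow> real \<Rightarrow> real \<Rightarrow> (real \<Rightarrow> real \<Rightarrow> real) \<Rightarrow> (real \<Rightarrow> real \<Rightarrow> real) \<Rightarrow> bool" where
  "ww_solution s \<kappa> T \<eta> v \<longleftrightarrow>
     cont_Hs (s + 1/2) T \<eta> \<and> cont_Hs s T v \<and>
     (\<forall>\<phi>. ftest \<phi> \<longrightarrow> (\<forall>t\<in>{0..T}.
        ((\<lambda>\<tau>. fpair (FT (cx (\<eta> \<tau>))) \<phi>) has_vector_derivative
          fpair (\<lambda>\<xi>. - \<i> * complex_of_real \<xi> * FT (cx (v t)) \<xi>
                     - \<i> * complex_of_real (tanh \<xi>) * FT1 (cx (\<lambda>x. \<eta> t x * v t x)) \<xi>) \<phi>)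
        (at t within {0..T})
      \<and>
        ((\<lambda>\<tau>. fpair (FT (cx (v \<tau>))) \<phi>) has_vector_derivative
          fpair (\<lambda>\<xi>. - \<i> * complex_of_real (tanh \<xi> * (1 + \<kappa> * \<xi>^2)) * FT (cx (\<eta> t)) \<xi>
                     - \<i> * complex_of_real (tanh \<xi>) * FT1 (cx (\<lambda>x. (v t x)^2 / 2)) \<xi>) \<phi>)
        (at t within {0..T})))"

end

theory Submission
  imports Defs "HOL-Probability.Probability"
begin

text \<open>Let \<open>N\<close> be the energy norm, \<open>g = J\<^sup>s\<^sup>-\<^sup>1\<^sup>/\<^sup>2 v\<close>, \<open>R = \<integral> g\<^sup>2\<close> and \<open>I = \<integral> \<eta> g\<^sup>2\<close>, so that
  \<open>E\<^sup>s = N/2 + I/2\<close>. Non-cavitation gives \<open>(h - 1) R \<le> I \<le> H R\<close>, hence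
  \<open>min h 1 / 2 \<cdot> N \<le> E\<^sup>s \<le> (1 + H)/2 \<cdot> N\<close> as soon as \<open>R \<le> N\<close>. By Plancherel,
  \<open>R \<le> \<integral> |g|\<^sup>2 = (2\<pi>)\<^sup>-\<^sup>1 \<integral> (1 + \<xi>\<^sup>2)\<^sup>s\<^sup>-\<^sup>1\<^sup>/\<^sup>2 |FT v \<xi>|\<^sup>2\<close>, and this is at most
  \<open>\<parallel>K\<^sup>-\<^sup>1 v\<parallel>\<^sup>2\<close> in \<open>H\<^sup>s\<^sup>-\<^sup>1\<^sup>/\<^sup>2\<close>, a part of \<open>N\<close>, because \<open>|K\<^sup>-\<^sup>1(\<xi>)|\<^sup>2 = \<xi> / tanh \<xi> \<ge> 1\<close>.

  The multipliers are specified through an abstract \<open>L\<^sup>2\<close> Fourier transform, so Plancherel's identity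
  and the existence of \<open>m(D) f\<close> for square-integrable \<open>m \<cdot> FT f\<close> must be established first:
  Bessel's inequality holds on \<open>L\<^sup>1 \<inter> L\<^sup>2\<close> by Gaussian regularisation, it extends the transform to
  \<open>L\<^sup>2\<close> through truncations and the completeness of \<open>L\<^sup>2\<close>, the transform is unique by Levy's
  uniqueness theorem for characteristic functions, and Fourier inversion, checked against Gaussian
  wave packets, turns Bessel's inequality into Plancherel's identity and makes the transform onto.\<close>

section \<open>Gaussian integrals\<close>

lemma integral_gaussian_iexp:
  "(\<integral>x. complex_of_real (exp (- x\<^sup>2 / 2)) * iexp (t * x) \<partial>lborel) = complex_of_real (sqrt (2*pi) * exp (- t\<^sup>2 / 2))"
proof -
  have "char std_normal_distribution t = complex_of_real (exp (- (t^2) / 2))"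
    by (simp add: char_std_normal_distribution)
  moreover have "char std_normal_distribution t = (\<integral>x. std_normal_density x *\<^sub>R iexp (t * x) \<partial>lborel)"
    unfolding char_def
    by (subst integral_density) (auto simp: normal_density_nonneg)
  ultimately have "(\<integral>x. std_normal_density x *\<^sub>R iexp (t * x) \<partial>lborel) = complex_of_real (exp (- (t^2) / 2))"
    by simp
  then have "(\<integral>x. complex_of_real (1 / sqrt (2 * pi)) * (complex_of_real (exp (- x\<^sup>2 / 2)) * iexp (t * x)) \<partial>lborel) = complex_of_real (exp (- (t^2) / 2))"
    by (simp add: std_normal_density_def scaleR_conv_of_real mult.assoc)
  then have "complex_of_real (1 / sqrt (2 * pi)) * (\<integral>x. complex_of_real (exp (- x\<^sup>2 / 2)) * iexp (t * x) \<partial>lborel) = complex_of_real (exp (- (t^2) / 2))"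
    by simp
  then show ?thesis
    by (simp add: field_simps of_real_mult[symmetric] del: of_real_mult)
qed

lemma integrable_gaussian:
  fixes a c :: real
  assumes "a > 0" shows "integrable lborel (\<lambda>y. exp (- a * (y - c)\<^sup>2))"
proof -
  define \<sigma> where "\<sigma> = 1 / sqrt (2*a)"
  have s: "\<sigma> > 0" "\<sigma>\<^sup>2 = 1/(2*a)" using assms by (auto simp: \<sigma>_def power_divide)
  have "exp (- a * (y - c)\<^sup>2) = sqrt (2 * pi * \<sigma>\<^sup>2) * normal_density c \<sigma> y" for y
    using s assms by (simp add: normal_density_def field_simps)
  then show ?thesis
    using integrable_normal_density[OF s(1), of c] by simp
qed

text \<open>The substitution \<open>y = c + u / \<surd>(2a)\<close> reduces this to the characteristic function of the
  standard normal distribution.\<close>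

lemma FT1_gaussian:
  assumes a: "a > 0"
  shows "FT1 (\<lambda>y. complex_of_real (exp (- a * (y - c)\<^sup>2))) x
       = exp (- \<i> * complex_of_real (x * c)) * complex_of_real (sqrt (pi / a) * exp (- x\<^sup>2 / (4 * a)))"
proof -
  define s where "s = 1 / sqrt (2*a)"
  have s: "s > 0" "a * s\<^sup>2 = 1/2" using a by (auto simp: s_def power_divide)
  have "FT1 (\<lambda>y. complex_of_real (exp (- a * (y - c)\<^sup>2))) x
     = (\<integral>y. complex_of_real (exp (- a * (y - c)\<^sup>2)) * exp (- \<i> * complex_of_real (y * x)) \<partial>lborel)"
    by (simp add: FT1_def)
  also have "\<dots> = \<bar>s\<bar> *\<^sub>R (\<integral>u. complex_of_real (exp (- a * ((c + s * u) - c)\<^sup>2)) * exp (- \<i> * complex_of_real ((c + s * u) * x)) \<partial>lborel)"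
    using s by (subst lborel_integral_real_affine[where c=s and t=c]) auto
  also have "(\<lambda>u. complex_of_real (exp (- a * ((c + s * u) - c)\<^sup>2)) * exp (- \<i> * complex_of_real ((c + s * u) * x)))
      = (\<lambda>u. exp (- \<i> * complex_of_real (x * c)) * (complex_of_real (exp (- u\<^sup>2 / 2)) * iexp ((- x * s) * u)))"
  proof
    fix u
    have e1: "exp (- a * ((c + s * u) - c)\<^sup>2) = exp (- u\<^sup>2 / 2)"
      using s by (intro arg_cong[where f=exp]) (simp add: power_mult_distrib field_simps)
    have e2: "exp (- \<i> * complex_of_real ((c + s * u) * x)) = exp (- \<i> * complex_of_real (x * c)) * iexp ((- x * s) * u)"
      by (subst exp_add[symmetric]) (rule arg_cong[where f=exp], simp add: field_simps)
    show "complex_of_real (exp (- a * ((c + s * u) - c)\<^sup>2)) * exp (- \<i> * complex_of_real ((c + s * u) * x))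
      = exp (- \<i> * complex_of_real (x * c)) * (complex_of_real (exp (- u\<^sup>2 / 2)) * iexp ((- x * s) * u))"
      unfolding e1 e2 by (simp only: mult_ac)
  qed
  also have "(\<integral>u. exp (- \<i> * complex_of_real (x * c)) * (complex_of_real (exp (- u\<^sup>2 / 2)) * iexp ((- x * s) * u)) \<partial>lborel)
     = exp (- \<i> * complex_of_real (x * c)) * complex_of_real (sqrt (2*pi) * exp (- (- x * s)\<^sup>2 / 2))"
    by (simp only: integral_mult_right_zero integral_gaussian_iexp)
  finally have FT1_eq: "FT1 (\<lambda>y. complex_of_real (exp (- a * (y - c)\<^sup>2))) x = \<bar>s\<bar> *\<^sub>R (exp (- \<i> * complex_of_real (x * c)) * complex_of_real (sqrt (2*pi) * exp (- (- x * s)\<^sup>2 / 2)))" .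
  have ss: "s\<^sup>2 = 1/(2*a)" using s(2) a by (simp add: field_simps)
  have exponent: "- (- x * s)\<^sup>2 / 2 = - x\<^sup>2 / (4 * a)"
    using a by (simp add: power_mult_distrib ss field_simps)
  have factor: "\<bar>s\<bar> * sqrt (2*pi) = sqrt (pi / a)"
    using s a by (simp add: s_def real_sqrt_divide field_simps real_sqrt_mult)
  show ?thesis
    unfolding FT1_eq exponent by (simp add: scaleR_conv_of_real factor[symmetric] mult_ac)
qed

section \<open>Square-integrable functions\<close>

definition sqnorm :: "(real \<Rightarrow> complex) \<Rightarrow> real" where
  "sqnorm f = (\<integral>x. (cmod (f x))\<^sup>2 \<partial>lborel)"

lemma sqnorm_nonneg: "sqnorm f \<ge> 0"
  unfolding sqnorm_def by (intro integral_nonneg_AE) auto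

lemma sqnorm_cong_AE:
  assumes "AE x in lborel. f x = g x" "f \<in> borel_measurable lborel" "g \<in> borel_measurable lborel"
  shows "sqnorm f = sqnorm g"
  unfolding sqnorm_def by (rule integral_cong_AE) (use assms in auto)

lemma sqnorm_cmult: "sqnorm (\<lambda>x. c * f x) = (cmod c)\<^sup>2 * sqnorm f"
  unfolding sqnorm_def by (simp add: norm_mult power_mult_distrib)

lemma sqnorm_diff_commute: "sqnorm (\<lambda>x. f x - g x) = sqnorm (\<lambda>x. g x - f x)"
  unfolding sqnorm_def by (simp add: norm_minus_commute)

lemma L2_measurable[measurable_dest]: "L2 f \<Longrightarrow> f \<in> borel_measurable lborel"
  by (simp add: L2_def)

lemma L2_integrable_square: "L2 f \<Longrightarrow> integrable lborel (\<lambda>x. (cmod (f x))\<^sup>2)"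
  by (simp add: L2_def)

lemma nn_integral_square_eq_sqnorm:
  assumes "L2 h" shows "(\<integral>\<^sup>+x. ennreal ((cmod (h x))\<^sup>2) \<partial>lborel) = ennreal (sqnorm h)"
  unfolding sqnorm_def using L2_integrable_square[OF assms] by (intro nn_integral_eq_integral) auto

lemma L2_if_nn_integral_square_le:
  assumes [measurable]: "h \<in> borel_measurable lborel"
    and le: "(\<integral>\<^sup>+x. ennreal ((cmod (h x))\<^sup>2) \<partial>lborel) \<le> ennreal c" and c: "c \<ge> 0"
  shows "L2 h \<and> sqnorm h \<le> c"
proof -
  have "(\<integral>\<^sup>+x. ennreal ((cmod (h x))\<^sup>2) \<partial>lborel) < top"
    using le ennreal_less_top[of c] by (rule le_less_trans)
  then have L: "L2 h"
    unfolding L2_def by (auto intro!: integrableI_bounded)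
  have "ennreal (sqnorm h) \<le> ennreal c" using nn_integral_square_eq_sqnorm[OF L] le by simp
  then show ?thesis using L c by simp
qed

lemma mult_le_mean_squares: "a * b \<le> (a\<^sup>2 + b\<^sup>2) / (2::real)"
  using sum_squares_bound[of a b] by simp

lemma mult_le_weighted_squares:
  fixes a b t :: real assumes "t > 0"
  shows "a * b \<le> (t * a\<^sup>2 + b\<^sup>2 / t) / 2"
proof -
  have "0 \<le> (t * a - b)\<^sup>2 / t" using assms by simp
  also have "(t * a - b)\<^sup>2 / t = t * a\<^sup>2 + b\<^sup>2 / t - 2 * a * b"
    using assms by (simp add: power2_eq_square field_simps)
  finally show ?thesis by simp
qed

lemma L2_dominated:
  assumes "L2 f" "g \<in> borel_measurable lborel" "AE x in lborel. cmod (g x) \<le> C * cmod (f x)"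
  shows "L2 g"
  unfolding L2_def
proof (intro conjI)
  show "g \<in> borel_measurable lborel" by fact
  show "integrable lborel (\<lambda>x. (cmod (g x))\<^sup>2)"
  proof (rule Bochner_Integration.integrable_bound)
    show "integrable lborel (\<lambda>x. C\<^sup>2 * (cmod (f x))\<^sup>2)" using L2_integrable_square[OF assms(1)] by simp
    show "(\<lambda>x. (cmod (g x))\<^sup>2) \<in> borel_measurable lborel" using assms(2) by measurable
    show "AE x in lborel. norm ((cmod (g x))\<^sup>2) \<le> norm (C\<^sup>2 * (cmod (f x))\<^sup>2)"
      using assms(3)
    proof eventually_elim
      case (elim x)
      have "(cmod (g x))\<^sup>2 \<le> (C * cmod (f x))\<^sup>2"
        using elim by (intro power_mono) auto
      then show ?case by (simp add: power_mult_distrib)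
    qed
  qed
qed

lemma L2_mult_bounded:
  assumes "L2 f" "m \<in> borel_measurable lborel" "\<And>x. cmod (m x) \<le> B"
  shows "L2 (\<lambda>x. m x * f x)"
proof (rule L2_dominated[of f _ B])
  show "(\<lambda>x. m x * f x) \<in> borel_measurable lborel" using assms by measurable
  show "AE x in lborel. cmod (m x * f x) \<le> B * cmod (f x)"
    using assms(3) by (auto simp: norm_mult intro!: mult_right_mono)
qed (use assms in auto)

lemma L2_cmult: "L2 f \<Longrightarrow> L2 (\<lambda>x. c * f x)"
  using L2_mult_bounded[of f "\<lambda>_. c" "cmod c"] by simp

lemma L2_diff:
  assumes f: "L2 f" and g: "L2 g" shows "L2 (\<lambda>x. f x - g x)"
  unfolding L2_def
proof (intro conjI)
  show "(\<lambda>x. f x - g x) \<in> borel_measurable lborel" using f g by measurable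
  show "integrable lborel (\<lambda>x. (cmod (f x - g x))\<^sup>2)"
  proof (rule Bochner_Integration.integrable_bound)
    show "integrable lborel (\<lambda>x. 2 * (cmod (f x))\<^sup>2 + 2 * (cmod (g x))\<^sup>2)"
      using L2_integrable_square[OF f] L2_integrable_square[OF g] by simp
    show "(\<lambda>x. (cmod (f x - g x))\<^sup>2) \<in> borel_measurable lborel" using f g by measurable
    show "AE x in lborel. norm ((cmod (f x - g x))\<^sup>2) \<le> norm (2 * (cmod (f x))\<^sup>2 + 2 * (cmod (g x))\<^sup>2)"
    proof (intro AE_I2)
      fix x
      have "(cmod (f x - g x))\<^sup>2 \<le> (cmod (f x) + cmod (g x))\<^sup>2"
        by (intro power_mono norm_triangle_ineq4) auto
      also have "\<dots> \<le> 2 * (cmod (f x))\<^sup>2 + 2 * (cmod (g x))\<^sup>2"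
        using mult_le_mean_squares[of "cmod (f x)" "cmod (g x)"] by (simp add: power2_sum)
      finally show "norm ((cmod (f x - g x))\<^sup>2) \<le> norm (2 * (cmod (f x))\<^sup>2 + 2 * (cmod (g x))\<^sup>2)"
        by simp
    qed
  qed
qed

lemma integrable_mult_L2:
  assumes "L2 f" "L2 g" shows "integrable lborel (\<lambda>x. f x * g x)"
proof (rule Bochner_Integration.integrable_bound)
  show "integrable lborel (\<lambda>x. ((cmod (f x))\<^sup>2 + (cmod (g x))\<^sup>2) / 2)"
    using L2_integrable_square[OF assms(1)] L2_integrable_square[OF assms(2)] by simp
  show "(\<lambda>x. f x * g x) \<in> borel_measurable lborel" using assms by measurable
  show "AE x in lborel. norm (f x * g x) \<le> norm (((cmod (f x))\<^sup>2 + (cmod (g x))\<^sup>2) / 2)"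
    using mult_le_mean_squares by (auto simp: norm_mult)
qed

lemma integrable_norm_mult_L2:
  assumes "L2 f" "L2 g" shows "integrable lborel (\<lambda>x. cmod (f x) * cmod (g x))"
  using integrable_norm[OF integrable_mult_L2[OF assms]] by (simp add: norm_mult)

lemma Cauchy_Schwarz_L2:
  assumes f: "L2 f" and g: "L2 g"
  shows "cmod (\<integral>x. f x * g x \<partial>lborel) \<le> sqrt (sqnorm f) * sqrt (sqnorm g)"
proof -
  have [measurable]: "f \<in> borel_measurable borel" "g \<in> borel_measurable borel"
    using f g by (simp_all add: L2_def)
  define I where "I = (\<integral>x. cmod (f x) * cmod (g x) \<partial>lborel)"
  have I0: "I \<ge> 0" unfolding I_def by (intro integral_nonneg_AE) auto
  have "(\<integral>\<^sup>+x. ennreal (cmod (f x)) * ennreal (cmod (g x)) \<partial>lborel) = ennreal I"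
    unfolding I_def ennreal_mult'[OF norm_ge_zero, symmetric]
    by (intro nn_integral_eq_integral integrable_norm_mult_L2 f g) auto
  then have "ennreal (I\<^sup>2) = (\<integral>\<^sup>+x. ennreal (cmod (f x)) * ennreal (cmod (g x)) \<partial>lborel)\<^sup>2"
    using I0 by (simp add: ennreal_power)
  also have "\<dots> \<le> (\<integral>\<^sup>+x. (ennreal (cmod (f x)))\<^sup>2 \<partial>lborel) * (\<integral>\<^sup>+x. (ennreal (cmod (g x)))\<^sup>2 \<partial>lborel)"
    by (intro Cauchy_Schwarz_nn_integral) measurable
  also have "\<dots> = ennreal (sqnorm f * sqnorm g)"
    using nn_integral_square_eq_sqnorm[OF f] nn_integral_square_eq_sqnorm[OF g]
    by (simp add: ennreal_power ennreal_mult sqnorm_nonneg)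
  finally have "I\<^sup>2 \<le> sqnorm f * sqnorm g"
    by (simp add: ennreal_le_iff sqnorm_nonneg)
  then have "I \<le> sqrt (sqnorm f) * sqrt (sqnorm g)"
    using I0 real_sqrt_le_mono by (fastforce simp: real_sqrt_mult)
  moreover have "cmod (\<integral>x. f x * g x \<partial>lborel) \<le> I"
    unfolding I_def using integral_norm_bound[of lborel "\<lambda>x. f x * g x"] by (simp add: norm_mult)
  ultimately show ?thesis by linarith
qed

lemma sqnorm_diff_le:
  assumes "L2 f" "L2 g" "L2 h"
  shows "sqnorm (\<lambda>x. f x - h x) \<le> 2 * sqnorm (\<lambda>x. f x - g x) + 2 * sqnorm (\<lambda>x. g x - h x)"
proof -
  have i1: "integrable lborel (\<lambda>x. (cmod (f x - h x))\<^sup>2)"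
    and i2: "integrable lborel (\<lambda>x. (cmod (f x - g x))\<^sup>2)"
    and i3: "integrable lborel (\<lambda>x. (cmod (g x - h x))\<^sup>2)"
    by (intro L2_integrable_square L2_diff assms)+
  have "sqnorm (\<lambda>x. f x - h x) \<le> (\<integral>x. 2 * (cmod (f x - g x))\<^sup>2 + 2 * (cmod (g x - h x))\<^sup>2 \<partial>lborel)"
    unfolding sqnorm_def
  proof (intro integral_mono i1)
    show "integrable lborel (\<lambda>x. 2 * (cmod (f x - g x))\<^sup>2 + 2 * (cmod (g x - h x))\<^sup>2)" using i2 i3 by simp
    fix x
    have "cmod (f x - h x) \<le> cmod (f x - g x) + cmod (g x - h x)"
      using norm_triangle_ineq[of "f x - g x" "g x - h x"] by simp
    then have "(cmod (f x - h x))\<^sup>2 \<le> (cmod (f x - g x) + cmod (g x - h x))\<^sup>2"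
      by (intro power_mono) auto
    also have "\<dots> \<le> 2 * (cmod (f x - g x))\<^sup>2 + 2 * (cmod (g x - h x))\<^sup>2"
      using mult_le_mean_squares[of "cmod (f x - g x)" "cmod (g x - h x)"] by (simp add: power2_sum)
    finally show "(cmod (f x - h x))\<^sup>2 \<le> 2 * (cmod (f x - g x))\<^sup>2 + 2 * (cmod (g x - h x))\<^sup>2" .
  qed
  also have "\<dots> = 2 * sqnorm (\<lambda>x. f x - g x) + 2 * sqnorm (\<lambda>x. g x - h x)"
    using i2 i3 by (simp add: sqnorm_def)
  finally show ?thesis .
qed

lemma tendsto_integral_mult_L2:
  assumes "L2 \<phi>" "L2 F" "\<And>n. L2 (Fn n)" "(\<lambda>n. sqnorm (\<lambda>x. Fn n x - F x)) \<longlonglongrightarrow> 0"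
  shows "(\<lambda>n. \<integral>x. Fn n x * \<phi> x \<partial>lborel) \<longlonglongrightarrow> (\<integral>x. F x * \<phi> x \<partial>lborel)"
proof -
  have "(\<lambda>n. sqrt (sqnorm (\<lambda>x. Fn n x - F x)) * sqrt (sqnorm \<phi>)) \<longlonglongrightarrow> sqrt 0 * sqrt (sqnorm \<phi>)"
    by (intro tendsto_intros assms)
  then have lim0: "(\<lambda>n. sqrt (sqnorm (\<lambda>x. Fn n x - F x)) * sqrt (sqnorm \<phi>)) \<longlonglongrightarrow> 0" by simp
  have "(\<lambda>n. (\<integral>x. Fn n x * \<phi> x \<partial>lborel) - (\<integral>x. F x * \<phi> x \<partial>lborel)) \<longlonglongrightarrow> 0"
  proof (rule Lim_null_comparison[OF always_eventually lim0], intro allI)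
    fix n
    have "(\<integral>x. Fn n x * \<phi> x \<partial>lborel) - (\<integral>x. F x * \<phi> x \<partial>lborel) = (\<integral>x. (Fn n x - F x) * \<phi> x \<partial>lborel)"
      using integrable_mult_L2[OF assms(3)[of n] assms(1)] integrable_mult_L2[OF assms(2) assms(1)]
      by (simp add: left_diff_distrib)
    also have "cmod \<dots> \<le> sqrt (sqnorm (\<lambda>x. Fn n x - F x)) * sqrt (sqnorm \<phi>)"
      by (rule Cauchy_Schwarz_L2) (intro L2_diff assms)+
    finally show "norm ((\<integral>x. Fn n x * \<phi> x \<partial>lborel) - (\<integral>x. F x * \<phi> x \<partial>lborel))
        \<le> sqrt (sqnorm (\<lambda>x. Fn n x - F x)) * sqrt (sqnorm \<phi>)" .
  qed
  then show ?thesis by (simp add: LIM_zero_iff)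
qed

section \<open>Completeness of \<open>L\<^sup>2\<close>\<close>

lemma L2_sqnorm_le_if_AE_tendsto:
  fixes f :: "nat \<Rightarrow> real \<Rightarrow> complex"
  assumes [measurable]: "\<And>k. f k \<in> borel_measurable lborel" "g \<in> borel_measurable lborel"
    and lim: "AE x in lborel. (\<lambda>k. f k x) \<longlonglongrightarrow> g x"
    and bound: "\<forall>\<^sub>F k in sequentially. L2 (f k) \<and> sqnorm (f k) \<le> c" and c: "c \<ge> 0"
  shows "L2 g \<and> sqnorm g \<le> c"
proof (rule L2_if_nn_integral_square_le[OF _ _ c])
  have "(\<integral>\<^sup>+x. ennreal ((cmod (g x))\<^sup>2) \<partial>lborel)
      = (\<integral>\<^sup>+x. liminf (\<lambda>k. ennreal ((cmod (f k x))\<^sup>2)) \<partial>lborel)"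
  proof (rule nn_integral_cong_AE)
    show "AE x in lborel. ennreal ((cmod (g x))\<^sup>2) = liminf (\<lambda>k. ennreal ((cmod (f k x))\<^sup>2))"
      using lim
    proof eventually_elim
      case (elim x)
      have "(\<lambda>k. ennreal ((cmod (f k x))\<^sup>2)) \<longlonglongrightarrow> ennreal ((cmod (g x))\<^sup>2)"
        by (intro tendsto_intros elim)
      then show ?case by (rule lim_imp_Liminf[OF sequentially_bot, symmetric])
    qed
  qed
  also have "\<dots> \<le> liminf (\<lambda>k. \<integral>\<^sup>+x. ennreal ((cmod (f k x))\<^sup>2) \<partial>lborel)"
    by (rule nn_integral_liminf) measurable
  also have "\<dots> \<le> limsup (\<lambda>k. \<integral>\<^sup>+x. ennreal ((cmod (f k x))\<^sup>2) \<partial>lborel)"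
    by (rule Liminf_le_Limsup) simp
  also have "\<dots> \<le> ennreal c"
  proof (rule Limsup_bounded)
    show "\<forall>\<^sub>F k in sequentially. (\<integral>\<^sup>+x. ennreal ((cmod (f k x))\<^sup>2) \<partial>lborel) \<le> ennreal c"
      using bound by eventually_elim (auto simp: nn_integral_square_eq_sqnorm intro: ennreal_leI)
  qed
  finally show "(\<integral>\<^sup>+x. ennreal ((cmod (g x))\<^sup>2) \<partial>lborel) \<le> ennreal c" .
qed measurable

text \<open>The series \<open>\<Sum>\<^sub>k 2\<^sup>k |d\<^sub>k|\<^sup>2\<close> has finite integral, so it is finite almost everywhere,
  and there \<open>|d\<^sub>k| \<le> (2\<^sup>k |d\<^sub>k|\<^sup>2 + 2\<^sup>-\<^sup>k) / 2\<close> is summable.\<close>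

lemma AE_summable_if_sqnorm_le_power:
  assumes L: "\<And>k. L2 (d k)" and small: "\<And>k. sqnorm (d k) \<le> (1/8)^k"
  shows "AE x in lborel. summable (\<lambda>k. d k x)"
proof -
  have [measurable]: "d k \<in> borel_measurable lborel" for k using L by (simp add: L2_def)
  define S where "S x = (\<Sum>k. ennreal (2^k * (cmod (d k x))\<^sup>2))" for x
  have "(\<integral>\<^sup>+x. S x \<partial>lborel) = (\<Sum>k. \<integral>\<^sup>+x. ennreal (2^k * (cmod (d k x))\<^sup>2) \<partial>lborel)"
    unfolding S_def by (rule nn_integral_suminf) measurable
  also have "\<dots> \<le> (\<Sum>k. ennreal ((1/4)^k))"
  proof (intro suminf_le allI)
    fix k :: nat
    have "(\<integral>\<^sup>+x. ennreal (2^k * (cmod (d k x))\<^sup>2) \<partial>lborel)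
        = ennreal (2^k) * (\<integral>\<^sup>+x. ennreal ((cmod (d k x))\<^sup>2) \<partial>lborel)"
      by (subst nn_integral_cmult[symmetric]) (auto simp: ennreal_mult)
    also have "\<dots> = ennreal (2^k * sqnorm (d k))"
      by (simp add: nn_integral_square_eq_sqnorm[OF L] ennreal_mult sqnorm_nonneg)
    also have "2^k * sqnorm (d k) \<le> (2::real)^k * (1/8)^k"
      using small[of k] by (intro mult_left_mono) auto
    also have "(2::real)^k * (1/8)^k = (1/4)^k" by (simp add: power_mult_distrib[symmetric])
    finally show "(\<integral>\<^sup>+x. ennreal (2^k * (cmod (d k x))\<^sup>2) \<partial>lborel) \<le> ennreal ((1/4)^k)"
      by (simp add: ennreal_leI)
  qed auto
  also have "\<dots> = ennreal (\<Sum>k. (1/4::real)^k)" by (rule suminf_ennreal2) auto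
  finally have "(\<integral>\<^sup>+x. S x \<partial>lborel) < top" using ennreal_less_top by (rule le_less_trans)
  moreover have "S \<in> borel_measurable lborel" unfolding S_def by measurable
  ultimately have "AE x in lborel. S x \<noteq> \<infinity>" by (intro nn_integral_PInf_AE) auto
  then show ?thesis
  proof eventually_elim
    case (elim x)
    have "summable (\<lambda>k. 2^k * (cmod (d k x))\<^sup>2)"
      by (rule summable_suminf_not_top) (use elim in \<open>auto simp: S_def\<close>)
    then have "summable (\<lambda>k. (2^k * (cmod (d k x))\<^sup>2 + (1/2::real)^k) / 2)"
      by (intro summable_divide summable_add summable_geometric) auto
    then have "summable (\<lambda>k. norm (d k x))"
    proof (rule summable_comparison_test')
      fix k :: nat
      have "cmod (d k x) * 1 \<le> (2^k * (cmod (d k x))\<^sup>2 + 1\<^sup>2 / 2^k) / 2"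
        by (rule mult_le_weighted_squares) auto
      then show "norm (norm (d k x)) \<le> (2^k * (cmod (d k x))\<^sup>2 + (1/2::real)^k) / 2"
        by (simp add: power_one_over)
    qed
    then show ?case by (rule summable_norm_cancel)
  qed
qed

lemma AE_convergent_subseq_if_L2_Cauchy:
  fixes F :: "nat \<Rightarrow> real \<Rightarrow> complex"
  assumes L: "\<And>n. L2 (F n)"
    and Cauchy: "\<And>e. e > 0 \<Longrightarrow> \<exists>N. \<forall>m\<ge>N. \<forall>n\<ge>N. sqnorm (\<lambda>x. F m x - F n x) < e"
  shows "\<exists>r. (\<forall>k. k \<le> r k) \<and> (AE x in lborel. convergent (\<lambda>k. F (r k) x))"
proof -
  obtain N :: "real \<Rightarrow> nat"
    where N: "\<And>e m n. e > 0 \<Longrightarrow> m \<ge> N e \<Longrightarrow> n \<ge> N e \<Longrightarrow> sqnorm (\<lambda>x. F m x - F n x) < e"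
    using Cauchy by metis
  define r where "r k = (\<Sum>j\<le>k. N ((1/8)^j)) + k" for k
  have rN: "N ((1/8)^k) \<le> r k" for k
    using member_le_sum[of k "{..k}" "\<lambda>j. N ((1/8)^j)"] by (simp add: r_def)
  have r_mono: "r k \<le> r (Suc k)" and r_ge: "k \<le> r k" for k
    by (simp_all add: r_def)
  define d where "d k x = F (r (Suc k)) x - F (r k) x" for k x
  have "AE x in lborel. summable (\<lambda>k. d k x)"
  proof (rule AE_summable_if_sqnorm_le_power)
    show "L2 (d k)" for k unfolding d_def by (intro L2_diff L)
    show "sqnorm (d k) \<le> (1/8)^k" for k
      unfolding d_def using N[of "(1/8)^k" "r (Suc k)" "r k"] rN[of k] r_mono[of k] by simp
  qed
  then have "AE x in lborel. convergent (\<lambda>k. F (r k) x)"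
  proof eventually_elim
    case (elim x)
    have "(\<lambda>k. F (r 0) x + (\<Sum>j<k. d j x)) \<longlonglongrightarrow> F (r 0) x + (\<Sum>j. d j x)"
      by (intro tendsto_add tendsto_const summable_LIMSEQ elim)
    moreover have "F (r 0) x + (\<Sum>j<k. d j x) = F (r k) x" for k
      unfolding d_def using sum_lessThan_telescope[of "\<lambda>j. F (r j) x" k] by simp
    ultimately show ?case by (auto simp: convergent_def)
  qed
  then show ?thesis using r_ge by blast
qed

lemma L2_complete:
  fixes F :: "nat \<Rightarrow> real \<Rightarrow> complex"
  assumes L: "\<And>n. L2 (F n)"
    and Cauchy: "\<And>e. e > 0 \<Longrightarrow> \<exists>N. \<forall>m\<ge>N. \<forall>n\<ge>N. sqnorm (\<lambda>x. F m x - F n x) < e"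
  shows "\<exists>G. L2 G \<and> (\<lambda>n. sqnorm (\<lambda>x. F n x - G x)) \<longlonglongrightarrow> 0
             \<and> (\<forall>B. (\<forall>n. sqnorm (F n) \<le> B) \<longrightarrow> sqnorm G \<le> B)"
proof -
  have [measurable]: "\<And>n. F n \<in> borel_measurable lborel" using L by (simp add: L2_def)
  obtain N :: "real \<Rightarrow> nat"
    where N: "\<And>e m n. e > 0 \<Longrightarrow> m \<ge> N e \<Longrightarrow> n \<ge> N e \<Longrightarrow> sqnorm (\<lambda>x. F m x - F n x) < e"
    using Cauchy by metis
  obtain r where r_ge: "\<And>k. k \<le> r k" and conv: "AE x in lborel. convergent (\<lambda>k. F (r k) x)"
    using AE_convergent_subseq_if_L2_Cauchy[OF L Cauchy] by blast
  define G where "G x = lim (\<lambda>k. F (r k) x)" for x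
  have [measurable]: "G \<in> borel_measurable lborel" unfolding G_def by measurable
  have F_to_G: "AE x in lborel. (\<lambda>k. F (r k) x) \<longlonglongrightarrow> G x"
    using conv by eventually_elim (simp add: G_def convergent_LIMSEQ_iff)
  have near: "L2 (\<lambda>x. F n x - G x) \<and> sqnorm (\<lambda>x. F n x - G x) \<le> e" if "e > 0" "n \<ge> N e" for e n
  proof -
    have "L2 (\<lambda>x. G x - F n x) \<and> sqnorm (\<lambda>x. G x - F n x) \<le> e"
    proof (rule L2_sqnorm_le_if_AE_tendsto)
      show "AE x in lborel. (\<lambda>k. F (r k) x - F n x) \<longlonglongrightarrow> G x - F n x"
        using F_to_G by eventually_elim (intro tendsto_intros)
      show "\<forall>\<^sub>F k in sequentially. L2 (\<lambda>x. F (r k) x - F n x) \<and> sqnorm (\<lambda>x. F (r k) x - F n x) \<le> e"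
      proof (rule eventually_sequentiallyI)
        fix k assume "N e \<le> k"
        then have "N e \<le> r k" using r_ge[of k] by linarith
        then show "L2 (\<lambda>x. F (r k) x - F n x) \<and> sqnorm (\<lambda>x. F (r k) x - F n x) \<le> e"
          using N[OF \<open>e > 0\<close> _ \<open>n \<ge> N e\<close>] by (auto intro: L2_diff L less_imp_le)
      qed
    qed (use \<open>e > 0\<close> in auto)
    moreover have "L2 (\<lambda>x. - 1 * (G x - F n x))" using calculation by (intro L2_cmult) simp
    ultimately show ?thesis by (simp add: sqnorm_diff_commute[of "F n"])
  qed
  have "L2 G"
    using L2_diff[OF L[of "N 1"] conjunct1[OF near[of 1 "N 1"]]] by simp
  moreover have "(\<lambda>n. sqnorm (\<lambda>x. F n x - G x)) \<longlonglongrightarrow> 0"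
  proof (rule LIMSEQ_I)
    fix e :: real assume "e > 0"
    then have "sqnorm (\<lambda>x. F n x - G x) < e" if "n \<ge> N (e/2)" for n
      using near[of "e/2" n] that by simp
    then show "\<exists>no. \<forall>n\<ge>no. norm (sqnorm (\<lambda>x. F n x - G x) - 0) < e"
      using sqnorm_nonneg by auto
  qed
  moreover have "sqnorm G \<le> B" if B: "\<forall>n. sqnorm (F n) \<le> B" for B
  proof -
    have "B \<ge> 0" using sqnorm_nonneg[of "F 0"] B[rule_format, of 0] by linarith
    then show ?thesis
      using L2_sqnorm_le_if_AE_tendsto[OF _ _ F_to_G, of B] B L by (simp add: always_eventually)
  qed
  ultimately show ?thesis by blast
qed

section \<open>The Fourier transform of integrable functions\<close>

lemma borel_measurable_cnj[measurable (raw)]: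
  fixes f :: "'a \<Rightarrow> complex"
  shows "f \<in> borel_measurable M \<Longrightarrow> (\<lambda>x. cnj (f x)) \<in> borel_measurable M"
  by (rule borel_measurable_continuous_on[where f=cnj]) (auto intro: continuous_intros)

lemma (in pair_sigma_finite) integrable_pair_mult:
  fixes a :: "'a \<Rightarrow> real" and b :: "'b \<Rightarrow> real"
  assumes a: "integrable M1 a" and b: "integrable M2 b"
  shows "integrable (M1 \<Otimes>\<^sub>M M2) (\<lambda>(x, y). a x * b y)"
proof (rule Fubini_integrable)
  have [measurable]: "a \<in> borel_measurable M1" "b \<in> borel_measurable M2" using a b by auto
  show "(\<lambda>(x, y). a x * b y) \<in> borel_measurable (M1 \<Otimes>\<^sub>M M2)" by measurable
  show "integrable M1 (\<lambda>x. \<integral>y. norm (case (x, y) of (x, y) \<Rightarrow> a x * b y) \<partial>M2)"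
    using a by (simp add: abs_mult integrable_abs)
  show "AE x in M1. integrable M2 (\<lambda>y. case (x, y) of (x, y) \<Rightarrow> a x * b y)"
    using b by simp
qed

lemma integrable_pair_bound:
  fixes F :: "real \<times> real \<Rightarrow> complex"
  assumes a: "integrable lborel a" and b: "integrable lborel b"
    and Fm: "F \<in> borel_measurable (lborel \<Otimes>\<^sub>M lborel)"
    and bd: "\<And>x y. cmod (F (x, y)) \<le> cmod (a x) * cmod (b y)"
  shows "integrable (lborel \<Otimes>\<^sub>M lborel) F"
proof (rule Bochner_Integration.integrable_bound)
  show "integrable (lborel \<Otimes>\<^sub>M lborel) (\<lambda>(x, y). cmod (a x) * cmod (b y))"
    by (rule lborel_pair.integrable_pair_mult) (use a b in auto)
  show "AE z in lborel \<Otimes>\<^sub>M lborel. norm (F z) \<le> norm (case z of (x, y) \<Rightarrow> cmod (a x) * cmod (b y))"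
    using bd by (auto split: prod.splits)
qed fact

lemma borel_measurable_FT1[measurable]:
  assumes "integrable lborel h" shows "FT1 h \<in> borel_measurable borel"
proof -
  have [measurable]: "h \<in> borel_measurable lborel" using assms by auto
  have "(\<lambda>\<xi>. \<integral>x. h x * exp (- \<i> * complex_of_real (x * \<xi>)) \<partial>lborel) \<in> borel_measurable lborel"
    by measurable
  then show ?thesis unfolding FT1_def[abs_def] by simp
qed

lemma norm_FT1_le: "cmod (FT1 h \<xi>) \<le> (\<integral>x. cmod (h x) \<partial>lborel)"
  unfolding FT1_def
  using integral_norm_bound[of lborel "\<lambda>x. h x * exp (- \<i> * complex_of_real (x * \<xi>))"]
  by (simp add: norm_mult)

lemma integrable_FT1_integrand:
  assumes "integrable lborel h"
  shows "integrable lborel (\<lambda>x. h x * exp (- \<i> * complex_of_real (x * \<xi>)))"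
proof (rule Bochner_Integration.integrable_bound[OF integrable_norm[OF assms]])
  have [measurable]: "h \<in> borel_measurable lborel" using assms by auto
  show "(\<lambda>x. h x * exp (- \<i> * complex_of_real (x * \<xi>))) \<in> borel_measurable lborel" by measurable
qed (auto simp: norm_mult)

lemma FT1_diff:
  assumes "integrable lborel h" "integrable lborel g"
  shows "FT1 (\<lambda>x. h x - g x) \<xi> = FT1 h \<xi> - FT1 g \<xi>"
  unfolding FT1_def using integrable_FT1_integrand[OF assms(1)] integrable_FT1_integrand[OF assms(2)]
  by (simp add: left_diff_distrib)

lemma cnj_FT1:
  "cnj (FT1 h \<xi>) = (\<integral>y. cnj (h y) * exp (\<i> * complex_of_real (y * \<xi>)) \<partial>lborel)"
  unfolding FT1_def by (simp flip: Bochner_Integration.integral_cnj add: exp_cnj)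

lemma integral_mult_FT1_swap:
  assumes h: "integrable lborel h" and p: "integrable lborel \<phi>"
  shows "(\<integral>x. h x * FT1 \<phi> x \<partial>lborel) = (\<integral>\<xi>. FT1 h \<xi> * \<phi> \<xi> \<partial>lborel)"
proof -
  have [measurable]: "h \<in> borel_measurable lborel" "\<phi> \<in> borel_measurable lborel" using h p by auto
  define f where "f x y = h x * \<phi> y * exp (- \<i> * complex_of_real (x * y))" for x y
  have int: "integrable (lborel \<Otimes>\<^sub>M lborel) (case_prod f)"
  proof (rule integrable_pair_bound[OF h p])
    show "case_prod f \<in> borel_measurable (lborel \<Otimes>\<^sub>M lborel)" unfolding f_def by measurable
  qed (simp add: f_def norm_mult)
  have "(\<integral>x. h x * FT1 \<phi> x \<partial>lborel) = (\<integral>x. (\<integral>y. f x y \<partial>lborel) \<partial>lborel)"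
    unfolding FT1_def f_def
    by (intro Bochner_Integration.integral_cong refl) (simp add: integral_mult_right_zero[symmetric] mult_ac)
  also have "\<dots> = (\<integral>y. (\<integral>x. f x y \<partial>lborel) \<partial>lborel)"
    by (rule lborel_pair.Fubini_integral[OF int, symmetric])
  also have "\<dots> = (\<integral>\<xi>. FT1 h \<xi> * \<phi> \<xi> \<partial>lborel)"
    unfolding FT1_def f_def
    by (intro Bochner_Integration.integral_cong refl) (simp add: integral_mult_left_zero[symmetric] mult_ac)
  finally show ?thesis .
qed

section \<open>Bessel's inequality on \<open>L\<^sup>1 \<inter> L\<^sup>2\<close>\<close>

text \<open>Damping by \<open>exp (- e \<xi>\<^sup>2)\<close> makes \<open>\<integral> |FT1 h|\<^sup>2\<close> absolutely convergent as a triple integral; by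
  Fubini it becomes \<open>\<integral>\<integral> h(x) h(y)\<^sup>* heat_kernel e (x - y)\<close>, and the bound \<open>2\<pi> \<parallel>h\<parallel>\<^sup>2\<close> survives
  the limit \<open>e \<rightarrow> 0\<close> by Fatou's lemma.\<close>

definition heat_kernel :: "real \<Rightarrow> real \<Rightarrow> real" where
  "heat_kernel e u = sqrt (pi / e) * exp (- u\<^sup>2 / (4*e))"

lemma heat_kernel_nonneg: "e > 0 \<Longrightarrow> heat_kernel e u \<ge> 0"
  by (simp add: heat_kernel_def)

lemma heat_kernel_diff_commute: "heat_kernel e (x - y) = heat_kernel e (y - x)"
  by (simp add: heat_kernel_def power2_commute)

lemma borel_measurable_heat_kernel[measurable]: "heat_kernel e \<in> borel_measurable borel"
  unfolding heat_kernel_def[abs_def] by measurable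

lemma FT1_gaussian_eq_heat_kernel:
  assumes "e > 0"
  shows "FT1 (\<lambda>\<xi>. complex_of_real (exp (- e * \<xi>\<^sup>2))) u = complex_of_real (heat_kernel e u)"
  using FT1_gaussian[OF assms, of 0 u] by (simp add: heat_kernel_def)

lemma integral_heat_kernel:
  assumes e: "e > 0"
  shows "integrable lborel (\<lambda>u. heat_kernel e (x - u))" "(\<integral>u. heat_kernel e (x - u) \<partial>lborel) = 2 * pi"
proof -
  have "integrable lborel (\<lambda>u. exp (- (1/(4*e)) * (u - x)\<^sup>2))"
    by (rule integrable_gaussian) (use e in simp)
  then show "integrable lborel (\<lambda>u. heat_kernel e (x - u))"
    unfolding heat_kernel_def by (simp add: power2_commute)
  have "FT1 (\<lambda>u. complex_of_real (exp (- (1/(4*e)) * (u - x)\<^sup>2))) 0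
      = complex_of_real (sqrt (pi / (1/(4*e))))"
    using FT1_gaussian[of "1/(4*e)" x 0] e by simp
  then have "(\<integral>u. exp (- (1/(4*e)) * (u - x)\<^sup>2) \<partial>lborel) = sqrt (4 * pi * e)"
    by (simp add: FT1_def mult.commute)
  moreover have "sqrt (pi / e) * sqrt (4 * pi * e) = 2 * pi"
    using e by (simp add: real_sqrt_mult[symmetric] real_sqrt_mult real_sqrt_divide)
  ultimately show "(\<integral>u. heat_kernel e (x - u) \<partial>lborel) = 2 * pi"
    unfolding heat_kernel_def by (simp add: power2_commute)
qed

lemma integral_heat_kernel_weighted:
  assumes L: "L2 h" and e: "e > 0"
  shows "integrable (lborel \<Otimes>\<^sub>M lborel) (\<lambda>(x, y). (cmod (h x))\<^sup>2 * heat_kernel e (x - y))" (is ?int)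
    and "(\<integral>(x, y). (cmod (h x))\<^sup>2 * heat_kernel e (x - y) \<partial>(lborel \<Otimes>\<^sub>M lborel)) = 2 * pi * sqnorm h"
proof -
  have [measurable]: "h \<in> borel_measurable lborel" using L by (simp add: L2_def)
  show ?int
  proof (rule lborel_pair.Fubini_integrable)
    have "(\<lambda>x. \<integral>y. norm ((cmod (h x))\<^sup>2 * heat_kernel e (x - y)) \<partial>lborel) = (\<lambda>x. 2 * pi * (cmod (h x))\<^sup>2)"
      using heat_kernel_nonneg[OF e] integral_heat_kernel[OF e] by (simp add: abs_mult mult.commute)
    then show "integrable lborel (\<lambda>x. \<integral>y. norm (case (x, y) of (x, y) \<Rightarrow> (cmod (h x))\<^sup>2 * heat_kernel e (x - y)) \<partial>lborel)"
      using L2_integrable_square[OF L] by simp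
    show "AE x in lborel. integrable lborel (\<lambda>y. case (x, y) of (x, y) \<Rightarrow> (cmod (h x))\<^sup>2 * heat_kernel e (x - y))"
      using integral_heat_kernel[OF e] by simp
  qed measurable
  then show "(\<integral>(x, y). (cmod (h x))\<^sup>2 * heat_kernel e (x - y) \<partial>(lborel \<Otimes>\<^sub>M lborel)) = 2 * pi * sqnorm h"
    using lborel_pair.integral_fst[of "\<lambda>x y. (cmod (h x))\<^sup>2 * heat_kernel e (x - y)", symmetric]
      integral_heat_kernel[OF e]
    by (simp add: sqnorm_def)
qed

lemma integral_heat_kernel_weighted_swap:
  assumes L: "L2 h" and e: "e > 0"
  shows "integrable (lborel \<Otimes>\<^sub>M lborel) (\<lambda>(x, y). (cmod (h y))\<^sup>2 * heat_kernel e (x - y))"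
    and "(\<integral>(x, y). (cmod (h y))\<^sup>2 * heat_kernel e (x - y) \<partial>(lborel \<Otimes>\<^sub>M lborel)) = 2 * pi * sqnorm h"
proof -
  have [measurable]: "h \<in> borel_measurable lborel" using L by (simp add: L2_def)
  show "integrable (lborel \<Otimes>\<^sub>M lborel) (\<lambda>(x, y). (cmod (h y))\<^sup>2 * heat_kernel e (x - y))"
    using lborel_pair.integrable_product_swap[OF integral_heat_kernel_weighted(1)[OF L e]]
    by (simp add: heat_kernel_diff_commute)
  have "(\<integral>(x, y). (case (y, x) of (a, b) \<Rightarrow> (cmod (h a))\<^sup>2 * heat_kernel e (a - b)) \<partial>(lborel \<Otimes>\<^sub>M lborel))
      = (\<integral>(x, y). (cmod (h x))\<^sup>2 * heat_kernel e (x - y) \<partial>(lborel \<Otimes>\<^sub>M lborel))"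
    by (rule lborel_pair.integral_product_swap) measurable
  then show "(\<integral>(x, y). (cmod (h y))\<^sup>2 * heat_kernel e (x - y) \<partial>(lborel \<Otimes>\<^sub>M lborel)) = 2 * pi * sqnorm h"
    using integral_heat_kernel_weighted(2)[OF L e] by (simp add: heat_kernel_diff_commute)
qed

text \<open>Schur's test for the positive kernel \<open>heat_kernel e (x - y)\<close>, from \<open>ab \<le> (a\<^sup>2 + b\<^sup>2)/2\<close>.\<close>

lemma integral_heat_kernel_bilinear_le:
  assumes L: "L2 h" and e: "e > 0"
  shows "integrable (lborel \<Otimes>\<^sub>M lborel) (\<lambda>(x, y). cmod (h x) * cmod (h y) * heat_kernel e (x - y))"
    and "(\<integral>(x, y). cmod (h x) * cmod (h y) * heat_kernel e (x - y) \<partial>(lborel \<Otimes>\<^sub>M lborel)) \<le> 2 * pi * sqnorm h"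
proof -
  let ?M = "lborel \<Otimes>\<^sub>M lborel :: (real \<times> real) measure"
  have [measurable]: "h \<in> borel_measurable lborel" using L by (simp add: L2_def)
  define B where "B = (\<lambda>(x, y). ((cmod (h x))\<^sup>2 * heat_kernel e (x - y) + (cmod (h y))\<^sup>2 * heat_kernel e (x - y)) / 2)"
  have B_int: "integrable ?M B"
    using integral_heat_kernel_weighted(1)[OF L e] integral_heat_kernel_weighted_swap(1)[OF L e]
    by (simp add: B_def split_beta')
  have le_B: "cmod (h x) * cmod (h y) * heat_kernel e (x - y) \<le> B (x, y)" for x y
  proof -
    have "cmod (h x) * cmod (h y) \<le> ((cmod (h x))\<^sup>2 + (cmod (h y))\<^sup>2) / 2" by (rule mult_le_mean_squares)
    from mult_right_mono[OF this heat_kernel_nonneg[OF e]] show ?thesis by (simp add: B_def algebra_simps)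
  qed
  show int: "integrable ?M (\<lambda>(x, y). cmod (h x) * cmod (h y) * heat_kernel e (x - y))"
  proof (rule Bochner_Integration.integrable_bound[OF B_int])
    show "AE z in ?M. norm (case z of (x, y) \<Rightarrow> cmod (h x) * cmod (h y) * heat_kernel e (x - y)) \<le> norm (B z)"
      using heat_kernel_nonneg[OF e]
      by (intro AE_I2) (auto split: prod.splits intro: order_trans[OF le_B abs_ge_self])
  qed measurable
  have "(\<integral>(x, y). cmod (h x) * cmod (h y) * heat_kernel e (x - y) \<partial>?M) \<le> integral\<^sup>L ?M B"
    using le_B by (intro integral_mono[OF int B_int]) auto
  also have "\<dots> = 2 * pi * sqnorm h"
    using integral_heat_kernel_weighted[OF L e] integral_heat_kernel_weighted_swap[OF L e]
    by (simp add: B_def split_beta')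
  finally show "(\<integral>(x, y). cmod (h x) * cmod (h y) * heat_kernel e (x - y) \<partial>?M) \<le> 2 * pi * sqnorm h" .
qed

lemma FT1_square_eq_integral_pair:
  assumes h: "integrable lborel h"
  shows "complex_of_real ((cmod (FT1 h \<xi>))\<^sup>2)
       = (\<integral>z. h (fst z) * cnj (h (snd z)) * exp (- \<i> * complex_of_real ((fst z - snd z) * \<xi>)) \<partial>(lborel \<Otimes>\<^sub>M lborel))"
proof -
  have [measurable]: "h \<in> borel_measurable lborel" using h by auto
  define k where "k x y = h x * cnj (h y) * exp (- \<i> * complex_of_real ((x - y) * \<xi>))" for x y
  have int: "integrable (lborel \<Otimes>\<^sub>M lborel) (\<lambda>(x, y). k x y)"
    by (rule integrable_pair_bound[OF h h]) (auto simp: k_def norm_mult)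
  have k_split: "k x y = (h x * exp (- \<i> * complex_of_real (x * \<xi>))) * (cnj (h y) * exp (\<i> * complex_of_real (y * \<xi>)))"
    for x y
  proof -
    have "exp (- \<i> * complex_of_real ((x - y) * \<xi>)) = exp (- \<i> * complex_of_real (x * \<xi>)) * exp (\<i> * complex_of_real (y * \<xi>))"
      by (subst exp_add[symmetric]) (rule arg_cong[where f=exp], simp add: algebra_simps)
    then show ?thesis by (simp add: k_def mult_ac)
  qed
  have "(\<integral>z. k (fst z) (snd z) \<partial>(lborel \<Otimes>\<^sub>M lborel)) = (\<integral>x. \<integral>y. k x y \<partial>lborel \<partial>lborel)"
    using lborel_pair.integral_fst[OF int] by (simp add: split_beta')
  also have "\<dots> = (\<integral>x. h x * exp (- \<i> * complex_of_real (x * \<xi>)) * cnj (FT1 h \<xi>) \<partial>lborel)"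
    unfolding k_split cnj_FT1 by simp
  also have "\<dots> = FT1 h \<xi> * cnj (FT1 h \<xi>)"
    unfolding FT1_def by simp
  finally show ?thesis by (simp only: complex_norm_square k_def)
qed

lemma integral_FT1_square_gaussian:
  assumes h: "integrable lborel h" and e: "e > 0"
  shows "complex_of_real (\<integral>\<xi>. (cmod (FT1 h \<xi>))\<^sup>2 * exp (- e * \<xi>\<^sup>2) \<partial>lborel)
       = (\<integral>z. h (fst z) * cnj (h (snd z)) * complex_of_real (heat_kernel e (fst z - snd z)) \<partial>(lborel \<Otimes>\<^sub>M lborel))"
proof -
  have [measurable]: "h \<in> borel_measurable lborel" using h by auto
  let ?M = "lborel \<Otimes>\<^sub>M lborel :: (real \<times> real) measure"
  interpret T: pair_sigma_finite ?M "lborel :: real measure"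
    unfolding pair_sigma_finite_def
    using sigma_finite_pair_measure lborel.sigma_finite_measure_axioms by blast
  define g where "g z \<xi> = h (fst z) * cnj (h (snd z)) * exp (- \<i> * complex_of_real ((fst z - snd z) * \<xi>))
    * complex_of_real (exp (- e * \<xi>\<^sup>2))" for z \<xi>
  have g_int: "integrable (?M \<Otimes>\<^sub>M lborel) (case_prod g)"
  proof (rule Bochner_Integration.integrable_bound)
    show "integrable (?M \<Otimes>\<^sub>M lborel) (\<lambda>(z, \<xi>). (case z of (x, y) \<Rightarrow> cmod (h x) * cmod (h y)) * exp (- e * \<xi>\<^sup>2))"
      using integrable_gaussian[OF e, of 0] lborel_pair.integrable_pair_mult[of "\<lambda>x. cmod (h x)" "\<lambda>x. cmod (h x)"] h
      by (intro T.integrable_pair_mult) auto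
    show "case_prod g \<in> borel_measurable (?M \<Otimes>\<^sub>M lborel)" unfolding g_def by measurable
    show "AE w in ?M \<Otimes>\<^sub>M lborel.
        norm (case_prod g w) \<le> norm ((\<lambda>(z, \<xi>). (case z of (x, y) \<Rightarrow> cmod (h x) * cmod (h y)) * exp (- e * \<xi>\<^sup>2)) w)"
      by (auto simp: g_def norm_mult split: prod.splits)
  qed
  have "complex_of_real (\<integral>\<xi>. (cmod (FT1 h \<xi>))\<^sup>2 * exp (- e * \<xi>\<^sup>2) \<partial>lborel)
      = (\<integral>\<xi>. complex_of_real ((cmod (FT1 h \<xi>))\<^sup>2) * complex_of_real (exp (- e * \<xi>\<^sup>2)) \<partial>lborel)"
    unfolding integral_complex_of_real[symmetric] of_real_mult ..
  also have "\<dots> = (\<integral>\<xi>. \<integral>z. g z \<xi> \<partial>?M \<partial>lborel)"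
    unfolding FT1_square_eq_integral_pair[OF h] g_def by simp
  also have "\<dots> = (\<integral>z. \<integral>\<xi>. g z \<xi> \<partial>lborel \<partial>?M)"
    by (rule T.Fubini_integral[OF g_int])
  also have "\<dots> = (\<integral>z. h (fst z) * cnj (h (snd z)) * complex_of_real (heat_kernel e (fst z - snd z)) \<partial>?M)"
  proof (rule Bochner_Integration.integral_cong[OF refl])
    fix z
    have "(\<integral>\<xi>. g z \<xi> \<partial>lborel)
        = h (fst z) * cnj (h (snd z)) * FT1 (\<lambda>\<xi>. complex_of_real (exp (- e * \<xi>\<^sup>2))) (fst z - snd z)"
      unfolding g_def FT1_def by (simp add: mult_ac)
    then show "(\<integral>\<xi>. g z \<xi> \<partial>lborel) = h (fst z) * cnj (h (snd z)) * complex_of_real (heat_kernel e (fst z - snd z))"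
      using FT1_gaussian_eq_heat_kernel[OF e] by simp
  qed
  finally show ?thesis .
qed

lemma Bessel_ineq_gaussian:
  assumes h: "integrable lborel h" and L: "L2 h" and e: "e > 0"
  shows "(\<integral>\<xi>. (cmod (FT1 h \<xi>))\<^sup>2 * exp (- e * \<xi>\<^sup>2) \<partial>lborel) \<le> 2 * pi * sqnorm h"
proof -
  let ?M = "lborel \<Otimes>\<^sub>M lborel :: (real \<times> real) measure"
  define P where "P = (\<integral>\<xi>. (cmod (FT1 h \<xi>))\<^sup>2 * exp (- e * \<xi>\<^sup>2) \<partial>lborel)"
  have "P \<le> cmod (complex_of_real P)" by simp
  also have "\<dots> \<le> (\<integral>z. cmod (h (fst z) * cnj (h (snd z)) * complex_of_real (heat_kernel e (fst z - snd z))) \<partial>?M)"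
    unfolding P_def integral_FT1_square_gaussian[OF h e] by (rule integral_norm_bound)
  also have "\<dots> = (\<integral>(x, y). cmod (h x) * cmod (h y) * heat_kernel e (x - y) \<partial>?M)"
    using heat_kernel_nonneg[OF e] by (simp add: norm_mult split_beta')
  also have "\<dots> \<le> 2 * pi * sqnorm h"
    by (rule integral_heat_kernel_bilinear_le(2)[OF L e])
  finally show ?thesis unfolding P_def .
qed

lemma Bessel_ineq_FT1:
  assumes h: "integrable lborel h" and L: "L2 h"
  shows "L2 (FT1 h) \<and> sqnorm (FT1 h) \<le> 2 * pi * sqnorm h"
proof -
  have [measurable]: "FT1 h \<in> borel_measurable borel" using h by (rule borel_measurable_FT1)
  define e where "e n = inverse (real (Suc n))" for n
  have e: "e n > 0" for n by (simp add: e_def)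
  define f where "f n \<xi> = FT1 h \<xi> * complex_of_real (exp (- e n * \<xi>\<^sup>2 / 2))" for n \<xi>
  have [measurable]: "f n \<in> borel_measurable lborel" for n unfolding f_def by measurable
  have f_square: "(cmod (f n \<xi>))\<^sup>2 = (cmod (FT1 h \<xi>))\<^sup>2 * exp (- e n * \<xi>\<^sup>2)" for n \<xi>
    by (simp add: f_def norm_mult power_mult_distrib power2_eq_square flip: exp_add)
  have "L2 (f n) \<and> sqnorm (f n) \<le> 2 * pi * sqnorm h" for n
  proof
    have "integrable lborel (\<lambda>\<xi>. (cmod (f n \<xi>))\<^sup>2)"
      unfolding f_square
    proof (rule Bochner_Integration.integrable_bound)
      show "integrable lborel (\<lambda>\<xi>. (\<integral>x. cmod (h x) \<partial>lborel)\<^sup>2 * exp (- e n * (\<xi> - 0)\<^sup>2))"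
        using integrable_gaussian[OF e[of n], of 0] by simp
      show "AE \<xi> in lborel. norm ((cmod (FT1 h \<xi>))\<^sup>2 * exp (- e n * \<xi>\<^sup>2))
          \<le> norm ((\<integral>x. cmod (h x) \<partial>lborel)\<^sup>2 * exp (- e n * (\<xi> - 0)\<^sup>2))"
        by (intro AE_I2) (simp add: abs_mult mult_right_mono power_mono norm_FT1_le)
    qed measurable
    then show "L2 (f n)" by (simp add: L2_def)
    show "sqnorm (f n) \<le> 2 * pi * sqnorm h"
      using Bessel_ineq_gaussian[OF h L e[of n]] by (simp add: sqnorm_def[of "f n"] f_square)
  qed
  moreover have "(\<lambda>n. f n \<xi>) \<longlonglongrightarrow> FT1 h \<xi>" for \<xi>
  proof -
    have "(\<lambda>n. FT1 h \<xi> * complex_of_real (exp (- e n * \<xi>\<^sup>2 / 2))) \<longlonglongrightarrow> FT1 h \<xi> * complex_of_real (exp (- 0 * \<xi>\<^sup>2 / 2))"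
      unfolding e_def by (intro tendsto_intros LIMSEQ_inverse_real_of_nat) auto
    then show ?thesis by (simp add: f_def)
  qed
  ultimately show ?thesis
    using L2_sqnorm_le_if_AE_tendsto[of f "FT1 h" "2 * pi * sqnorm h"] sqnorm_nonneg[of h] by simp
qed

section \<open>Existence of the \<open>L\<^sup>2\<close> Fourier transform\<close>

definition trunc :: "nat \<Rightarrow> (real \<Rightarrow> complex) \<Rightarrow> real \<Rightarrow> complex" where
  "trunc n f x = (if \<bar>x\<bar> \<le> real n then f x else 0)"

lemma borel_measurable_trunc[measurable]:
  assumes [measurable]: "f \<in> borel_measurable lborel" shows "trunc n f \<in> borel_measurable lborel"
  unfolding trunc_def[abs_def] by measurable

lemma trunc_integrable_L2:
  assumes L: "L2 f"
  shows "integrable lborel (trunc n f)" "L2 (trunc n f)"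
proof -
  have [measurable]: "f \<in> borel_measurable lborel" using L by (simp add: L2_def)
  define ch where "ch x = (if \<bar>x\<bar> \<le> real n then (1::complex) else 0)" for x
  have [measurable]: "ch \<in> borel_measurable lborel" unfolding ch_def[abs_def] by measurable
  have eq: "trunc n f = (\<lambda>x. ch x * f x)" by (rule ext) (simp add: trunc_def ch_def)
  have "(\<lambda>x. (cmod (ch x))\<^sup>2) = indicator {-real n..real n}"
    by (rule ext) (auto simp: ch_def indicator_def abs_le_iff)
  then have "L2 ch"
    by (simp add: L2_def integrable_indicator_iff emeasure_lborel_Icc_eq)
  then show "integrable lborel (trunc n f)" unfolding eq by (rule integrable_mult_L2[OF _ L])
  show "L2 (trunc n f)" unfolding eq by (rule L2_mult_bounded[OF L, of _ 1]) (auto simp: ch_def)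
qed

lemma sqnorm_diff_trunc_tendsto:
  assumes L: "L2 f"
  shows "(\<lambda>n. sqnorm (\<lambda>x. trunc n f x - f x)) \<longlonglongrightarrow> 0"
proof -
  have [measurable]: "f \<in> borel_measurable lborel" using L by (simp add: L2_def)
  have "(\<lambda>n. \<integral>x. (cmod (trunc n f x - f x))\<^sup>2 \<partial>lborel) \<longlonglongrightarrow> (\<integral>x. (0::real) \<partial>(lborel::real measure))"
  proof (rule integral_dominated_convergence[where w="\<lambda>x. (cmod (f x))\<^sup>2"
        and s="\<lambda>n x. (cmod (trunc n f x - f x))\<^sup>2" and f="\<lambda>x. 0"])
    show "integrable lborel (\<lambda>x. (cmod (f x))\<^sup>2)" by (rule L2_integrable_square[OF L])
    show "AE x in lborel. (\<lambda>n. (cmod (trunc n f x - f x))\<^sup>2) \<longlonglongrightarrow> 0"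
    proof (intro AE_I2 tendsto_eventually)
      fix x :: real
      obtain N :: nat where "\<bar>x\<bar> \<le> real N" using real_arch_simple by blast
      then show "\<forall>\<^sub>F n in sequentially. (cmod (trunc n f x - f x))\<^sup>2 = 0"
        by (intro eventually_sequentiallyI[of N]) (auto simp: trunc_def)
    qed
    show "AE x in lborel. norm ((cmod (trunc n f x - f x))\<^sup>2) \<le> (cmod (f x))\<^sup>2" for n
      by (auto simp: trunc_def)
  qed measurable
  then show ?thesis by (simp add: sqnorm_def)
qed

lemma L2_Cauchy_if_tendsto:
  assumes L: "L2 f" "\<And>n. L2 (g n)" and lim: "(\<lambda>n. sqnorm (\<lambda>x. g n x - f x)) \<longlonglongrightarrow> 0" and e: "e > 0"
  shows "\<exists>N. \<forall>m\<ge>N. \<forall>n\<ge>N. sqnorm (\<lambda>x. g m x - g n x) < e"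
proof -
  obtain N where N: "\<And>n. n \<ge> N \<Longrightarrow> sqnorm (\<lambda>x. g n x - f x) < e / 4"
    using LIMSEQ_D[OF lim, of "e / 4"] e sqnorm_nonneg by auto
  have "sqnorm (\<lambda>x. g m x - g n x) < e" if "m \<ge> N" "n \<ge> N" for m n
    using sqnorm_diff_le[of "g m" f "g n"] L N[OF \<open>m \<ge> N\<close>] N[OF \<open>n \<ge> N\<close>]
      sqnorm_diff_commute[of f "g n"] by simp
  then show ?thesis by blast
qed

lemma L2_Cauchy_FT1_trunc:
  assumes L: "L2 f" and e: "e > 0"
  shows "\<exists>N. \<forall>m\<ge>N. \<forall>n\<ge>N. sqnorm (\<lambda>\<xi>. FT1 (trunc m f) \<xi> - FT1 (trunc n f) \<xi>) < e"
proof -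
  have fn: "integrable lborel (trunc n f)" "L2 (trunc n f)" for n by (rule trunc_integrable_L2[OF L])+
  obtain N where N: "\<And>m n. m \<ge> N \<Longrightarrow> n \<ge> N \<Longrightarrow> sqnorm (\<lambda>x. trunc m f x - trunc n f x) < e / (2 * pi)"
    using L2_Cauchy_if_tendsto[OF L fn(2) sqnorm_diff_trunc_tendsto[OF L], of "e / (2 * pi)"] e by auto
  have "sqnorm (\<lambda>\<xi>. FT1 (trunc m f) \<xi> - FT1 (trunc n f) \<xi>) < e" if "m \<ge> N" "n \<ge> N" for m n
  proof -
    have "sqnorm (\<lambda>\<xi>. FT1 (trunc m f) \<xi> - FT1 (trunc n f) \<xi>) \<le> 2 * pi * sqnorm (\<lambda>x. trunc m f x - trunc n f x)"
      unfolding FT1_diff[OF fn(1) fn(1), symmetric]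
      by (intro conjunct2[OF Bessel_ineq_FT1] Bochner_Integration.integrable_diff fn L2_diff)
    also have "\<dots> < e" using N[OF that] by (simp add: field_simps)
    finally show ?thesis .
  qed
  then show ?thesis by blast
qed

text \<open>The transform of \<open>f\<close> is the \<open>L\<^sup>2\<close> limit of the transforms \<open>FT1\<close> of its truncations,
  which is a Cauchy sequence by Bessel's inequality.\<close>

lemma ex_is_FT:
  assumes L: "L2 f"
  shows "\<exists>F. is_FT f F \<and> sqnorm F \<le> 2 * pi * sqnorm f"
proof -
  have [measurable]: "f \<in> borel_measurable lborel" using L by (simp add: L2_def)
  define Fn where "Fn n = FT1 (trunc n f)" for n
  have fn: "integrable lborel (trunc n f)" "L2 (trunc n f)" for n by (rule trunc_integrable_L2[OF L])+
  have Fn: "L2 (Fn n)" "sqnorm (Fn n) \<le> 2 * pi * sqnorm (trunc n f)" for n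
    unfolding Fn_def using Bessel_ineq_FT1[OF fn] by auto
  have trunc_lim: "(\<lambda>n. sqnorm (\<lambda>x. trunc n f x - f x)) \<longlonglongrightarrow> 0"
    by (rule sqnorm_diff_trunc_tendsto[OF L])
  have "\<exists>N. \<forall>m\<ge>N. \<forall>n\<ge>N. sqnorm (\<lambda>x. Fn m x - Fn n x) < e" if "e > 0" for e
    unfolding Fn_def by (rule L2_Cauchy_FT1_trunc[OF L that])
  then obtain F where F: "L2 F" "(\<lambda>n. sqnorm (\<lambda>x. Fn n x - F x)) \<longlonglongrightarrow> 0"
    and F_bound: "\<And>B. \<forall>n. sqnorm (Fn n) \<le> B \<Longrightarrow> sqnorm F \<le> B"
    using L2_complete[of Fn, OF Fn(1)] by blast
  have "sqnorm (trunc n f) \<le> sqnorm f" for n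
    unfolding sqnorm_def
    by (intro integral_mono L2_integrable_square L fn) (simp add: trunc_def)
  then have "sqnorm F \<le> 2 * pi * sqnorm f"
    using Fn(2) by (intro F_bound allI) (meson mult_left_mono order_trans pi_ge_zero zero_le_numeral zero_le_mult_iff)
  moreover have "is_FT f F"
    unfolding is_FT_def
  proof (intro conjI F allI impI)
    fix \<phi> assume "integrable lborel \<phi> \<and> L2 \<phi>"
    then have \<phi>: "integrable lborel \<phi>" "L2 \<phi>" by auto
    have "L2 (FT1 \<phi>)" using Bessel_ineq_FT1[OF \<phi>] by simp
    then have "(\<lambda>n. \<integral>x. trunc n f x * FT1 \<phi> x \<partial>lborel) \<longlonglongrightarrow> (\<integral>x. f x * FT1 \<phi> x \<partial>lborel)"
      by (rule tendsto_integral_mult_L2[OF _ L fn(2) trunc_lim])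
    moreover have "(\<lambda>n. \<integral>\<xi>. Fn n \<xi> * \<phi> \<xi> \<partial>lborel) \<longlonglongrightarrow> (\<integral>\<xi>. F \<xi> * \<phi> \<xi> \<partial>lborel)"
      by (rule tendsto_integral_mult_L2[OF \<phi>(2) F(1) Fn(1) F(2)])
    moreover have "(\<integral>x. trunc n f x * FT1 \<phi> x \<partial>lborel) = (\<integral>\<xi>. Fn n \<xi> * \<phi> \<xi> \<partial>lborel)" for n
      unfolding Fn_def by (rule integral_mult_FT1_swap[OF fn(1) \<phi>(1)])
    ultimately show "(\<integral>x. f x * FT1 \<phi> x \<partial>lborel) = (\<integral>\<xi>. F \<xi> * \<phi> \<xi> \<partial>lborel)"
      using LIMSEQ_unique by auto
  qed
  ultimately show ?thesis by blast
qed

section \<open>Uniqueness of the Fourier transform\<close>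

lemma real_distribution_density:
  fixes g :: "real \<Rightarrow> real"
  assumes gm: "g \<in> borel_measurable lborel" and g0: "\<And>x. g x \<ge> 0"
    and gi: "integrable lborel g" and g1: "(\<integral>x. g x \<partial>lborel) = 1"
  shows "real_distribution (density lborel g)"
proof -
  have "emeasure (density lborel g) (space (density lborel g)) = 1"
  proof -
    have "emeasure (density lborel g) (space (density lborel g)) = (\<integral>\<^sup>+x. ennreal (g x) * indicator UNIV x \<partial>lborel)"
      using gm by (simp add: emeasure_density)
    also have "\<dots> = (\<integral>\<^sup>+x. ennreal (g x) \<partial>lborel)" by simp
    also have "\<dots> = ennreal (\<integral>x. g x \<partial>lborel)" by (rule nn_integral_eq_integral[OF gi]) (simp add: g0)
    finally show ?thesis using g1 by simp
  qed
  then have "prob_space (density lborel g)" by (rule prob_spaceI)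
  then show ?thesis unfolding real_distribution_def real_distribution_axioms_def by simp
qed

lemma char_density_lborel:
  fixes g :: "real \<Rightarrow> real"
  assumes gm: "g \<in> borel_measurable lborel" and g0: "\<And>x. g x \<ge> 0"
  shows "char (density lborel g) t = (\<integral>x. complex_of_real (g x) * iexp (t * x) \<partial>lborel)"
  unfolding char_def using gm g0
  by (subst integral_density) (auto simp: scaleR_conv_of_real)

text \<open>After normalisation both densities have the same characteristic function, so they define the
  same distribution by Levy's uniqueness theorem.\<close>

lemma AE_eq_if_char_eq_nonneg:
  fixes p q :: "real \<Rightarrow> real"
  assumes p: "integrable lborel p" "\<And>x. p x \<ge> 0" and q: "integrable lborel q" "\<And>x. q x \<ge> 0"
    and eq: "\<And>t. (\<integral>x. complex_of_real (p x) * iexp (t * x) \<partial>lborel) = (\<integral>x. complex_of_real (q x) * iexp (t * x) \<partial>lborel)"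
  shows "AE x in lborel. p x = q x"
proof -
  have [measurable]: "p \<in> borel_measurable lborel" "q \<in> borel_measurable lborel" using p q by auto
  define m where "m = (\<integral>x. p x \<partial>lborel)"
  have m_eq: "m = (\<integral>x. q x \<partial>lborel)" using eq[of 0] by (simp add: m_def)
  have "m \<ge> 0" unfolding m_def using p by (intro integral_nonneg_AE) auto
  show ?thesis
  proof (cases "m = 0")
    case True
    have "integral\<^sup>L lborel p = 0" "integral\<^sup>L lborel q = 0" using True m_eq by (simp_all add: m_def)
    then have "AE x in lborel. p x = 0" "AE x in lborel. q x = 0"
      using p q by (simp_all add: integral_nonneg_eq_0_iff_AE)
    then show ?thesis by eventually_elim simp
  next
    case False
    with \<open>m \<ge> 0\<close> have m: "m > 0" by simp
    define P where "P = density lborel (\<lambda>x. p x / m)"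
    define Q where "Q = density lborel (\<lambda>x. q x / m)"
    have "real_distribution P" unfolding P_def
      by (rule real_distribution_density) (use m p in \<open>auto simp: m_def\<close>)
    moreover have "real_distribution Q" unfolding Q_def
      by (rule real_distribution_density) (use m q m_eq in auto)
    moreover have "char P = char Q"
    proof
      fix t
      have "char P t = complex_of_real (1/m) * (\<integral>x. complex_of_real (p x) * iexp (t * x) \<partial>lborel)"
        unfolding P_def using m p by (subst char_density_lborel) (auto simp: mult.assoc)
      also have "\<dots> = char Q t"
        unfolding Q_def eq using m q by (subst char_density_lborel) (auto simp: mult.assoc)
      finally show "char P t = char Q t" .
    qed
    ultimately have "P = Q" by (intro Levy_uniqueness)
    then have "AE x in lborel. ennreal (p x / m) = ennreal (q x / m)"
      unfolding P_def Q_def by (subst (asm) sigma_finite_measure.density_unique_iff[OF sigma_finite_lborel]) auto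
    then show ?thesis
      by eventually_elim (use m p(2) q(2) in \<open>simp add: ennreal_inj divide_cancel_right\<close>)
  qed
qed

lemma AE_zero_if_char_zero_real:
  fixes r :: "real \<Rightarrow> real"
  assumes r: "integrable lborel r"
    and zero: "\<And>t. (\<integral>x. complex_of_real (r x) * iexp (t * x) \<partial>lborel) = 0"
  shows "AE x in lborel. r x = 0"
proof -
  have [measurable]: "r \<in> borel_measurable lborel" using r by auto
  define p where "p x = max (r x) 0" for x
  define q where "q x = max (- r x) 0" for x
  have r_eq: "r x = p x - q x" for x by (auto simp: p_def q_def)
  have p: "integrable lborel p" and q: "integrable lborel q"
    unfolding p_def q_def by (intro integrable_max r integrable_minus integrable_zero)+
  have "AE x in lborel. p x = q x"
  proof (rule AE_eq_if_char_eq_nonneg[OF p _ q])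
    fix t
    have [measurable]: "p \<in> borel_measurable lborel" "q \<in> borel_measurable lborel"
      unfolding p_def[abs_def] q_def[abs_def] by measurable
    have "integrable lborel (\<lambda>x. complex_of_real (p x) * iexp (t * x))"
      by (rule Bochner_Integration.integrable_bound[OF p]) (auto simp: norm_mult)
    moreover have "integrable lborel (\<lambda>x. complex_of_real (q x) * iexp (t * x))"
      by (rule Bochner_Integration.integrable_bound[OF q]) (auto simp: norm_mult)
    ultimately show "(\<integral>x. complex_of_real (p x) * iexp (t * x) \<partial>lborel) = (\<integral>x. complex_of_real (q x) * iexp (t * x) \<partial>lborel)"
      using zero[of t] by (simp add: r_eq left_diff_distrib)
  qed (auto simp: p_def q_def)
  then show ?thesis by eventually_elim (simp add: r_eq)
qed

lemma integrable_mult_iexp: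
  assumes wi: "integrable lborel w"
  shows "integrable lborel (\<lambda>x. w x * iexp (t * x))"
proof (rule Bochner_Integration.integrable_bound[OF integrable_norm[OF wi]])
  have [measurable]: "w \<in> borel_measurable lborel" using wi by auto
  show "(\<lambda>x. w x * iexp (t * x)) \<in> borel_measurable lborel" by measurable
qed (auto simp: norm_mult)

lemma AE_zero_if_char_zero:
  fixes w :: "real \<Rightarrow> complex"
  assumes w_int: "integrable lborel w" and zero: "\<And>t. (\<integral>x. w x * iexp (t * x) \<partial>lborel) = 0"
  shows "AE x in lborel. w x = 0"
proof -
  have [measurable]: "w \<in> borel_measurable lborel" using w_int by auto
  have cnj_zero: "(\<integral>x. cnj (w x) * iexp (t * x) \<partial>lborel) = 0" for t
  proof -
    have "(\<integral>x. cnj (w x) * iexp (t * x) \<partial>lborel) = (\<integral>x. cnj (w x * iexp ((- t) * x)) \<partial>lborel)"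
      by (simp add: exp_cnj)
    also have "\<dots> = cnj (\<integral>x. w x * iexp ((- t) * x) \<partial>lborel)" by (rule Bochner_Integration.integral_cnj)
    also have "\<dots> = 0" using zero[of "- t"] by simp
    finally show ?thesis .
  qed
  have cnj_int: "integrable lborel (\<lambda>x. cnj (w x))" using w_int by simp
  have Re_zero: "AE x in lborel. Re (w x) = 0"
  proof (rule AE_zero_if_char_zero_real)
    show "integrable lborel (\<lambda>x. Re (w x))" using w_int by simp
    fix t
    have eq: "complex_of_real (Re (w x)) * iexp (t * x) = (w x * iexp (t * x) + cnj (w x) * iexp (t * x)) / 2" for x
    proof -
      have e1: "complex_of_real (Re (w x)) = (w x + cnj (w x)) / 2" by (simp add: complex_add_cnj)
      show ?thesis by (subst e1) (simp add: add_divide_distrib ring_distribs)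
    qed
    show "(\<integral>x. complex_of_real (Re (w x)) * iexp (t * x) \<partial>lborel) = 0"
      unfolding eq using integrable_mult_iexp[OF w_int, of t] integrable_mult_iexp[OF cnj_int, of t] zero[of t] cnj_zero[of t] by simp
  qed
  have Im_zero: "AE x in lborel. Im (w x) = 0"
  proof (rule AE_zero_if_char_zero_real)
    show "integrable lborel (\<lambda>x. Im (w x))" using w_int by simp
    fix t
    have eq: "complex_of_real (Im (w x)) * iexp (t * x) = (w x * iexp (t * x) - cnj (w x) * iexp (t * x)) / (2 * \<i>)" for x
    proof -
      have d: "w x - cnj (w x) = complex_of_real (Im (w x)) * (2 * \<i>)"
        by (simp add: complex_eq_iff)
      have d2: "w x * iexp (t * x) - cnj (w x) * iexp (t * x) = (complex_of_real (Im (w x)) * iexp (t * x)) * (2 * \<i>)"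
        by (simp only: left_diff_distrib[symmetric] d mult_ac)
      show ?thesis by (simp only: d2, rule nonzero_mult_div_cancel_right[symmetric]) simp
    qed
    show "(\<integral>x. complex_of_real (Im (w x)) * iexp (t * x) \<partial>lborel) = 0"
      unfolding eq using integrable_mult_iexp[OF w_int, of t] integrable_mult_iexp[OF cnj_int, of t] zero[of t] cnj_zero[of t] by simp
  qed
  show ?thesis using Re_zero Im_zero by eventually_elim (simp add: complex_eq_iff)
qed

lemma L2_gaussian: "L2 (\<lambda>x. complex_of_real (exp (- x\<^sup>2)))"
  unfolding L2_def
proof
  show "(\<lambda>x. complex_of_real (exp (- x\<^sup>2))) \<in> borel_measurable lborel" by measurable
  have "(\<lambda>x. (cmod (complex_of_real (exp (- x\<^sup>2))))\<^sup>2) = (\<lambda>x. exp (- 2 * (x - 0)\<^sup>2))"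
    by (rule ext) (simp add: power2_eq_square exp_add[symmetric])
  then show "integrable lborel (\<lambda>x. (cmod (complex_of_real (exp (- x\<^sup>2))))\<^sup>2)"
    using integrable_gaussian[of 2 0] by simp
qed

definition gaussian_wave :: "real \<Rightarrow> real \<Rightarrow> complex" where
  "gaussian_wave t x = complex_of_real (exp (- x\<^sup>2)) * iexp (t * x)"

lemma borel_measurable_gaussian_wave[measurable]: "gaussian_wave t \<in> borel_measurable borel"
  unfolding gaussian_wave_def[abs_def] by measurable

lemma integrable_gaussian_wave: "integrable lborel (gaussian_wave t)"
proof (rule Bochner_Integration.integrable_bound)
  show "integrable lborel (\<lambda>x::real. exp (- (x - 0)\<^sup>2))" using integrable_gaussian[of 1 0] by simp
qed (auto simp: gaussian_wave_def norm_mult)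

lemma L2_gaussian_wave: "L2 (gaussian_wave t)"
proof -
  have "gaussian_wave t = (\<lambda>x. iexp (t * x) * complex_of_real (exp (- x\<^sup>2)))"
    by (simp add: gaussian_wave_def fun_eq_iff mult.commute)
  then show ?thesis using L2_mult_bounded[OF L2_gaussian, of "\<lambda>x. iexp (t * x)" 1] by simp
qed

text \<open>\<open>D exp (- x\<^sup>2)\<close> is integrable and its Fourier integral vanishes identically.\<close>

lemma AE_zero_if_orthogonal_gaussian_waves:
  assumes L: "L2 D" and zero: "\<And>t. (\<integral>x. D x * gaussian_wave t x \<partial>lborel) = 0"
  shows "AE x in lborel. D x = 0"
proof -
  define w where "w x = D x * complex_of_real (exp (- x\<^sup>2))" for x
  have "AE x in lborel. w x = 0"
  proof (rule AE_zero_if_char_zero)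
    show "integrable lborel w" unfolding w_def by (rule integrable_mult_L2[OF L L2_gaussian])
  qed (use zero in \<open>simp add: w_def gaussian_wave_def mult.assoc\<close>)
  then show ?thesis by eventually_elim (simp add: w_def)
qed

lemma is_FT_L2: "is_FT f F \<Longrightarrow> L2 F"
  by (simp add: is_FT_def)

lemma is_FT_integral_mult:
  "is_FT f F \<Longrightarrow> integrable lborel \<phi> \<Longrightarrow> L2 \<phi> \<Longrightarrow> (\<integral>x. f x * FT1 \<phi> x \<partial>lborel) = (\<integral>\<xi>. F \<xi> * \<phi> \<xi> \<partial>lborel)"
  by (simp add: is_FT_def)

lemma is_FT_unique_AE:
  assumes F1: "is_FT f F1" and F2: "is_FT f F2"
  shows "AE x in lborel. F1 x = F2 x"
proof -
  have L: "L2 F1" "L2 F2" using F1 F2 by (simp_all add: is_FT_L2)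
  have "AE x in lborel. F1 x - F2 x = 0"
  proof (rule AE_zero_if_orthogonal_gaussian_waves)
    show "L2 (\<lambda>x. F1 x - F2 x)" by (rule L2_diff[OF L])
    fix t
    have "(\<integral>x. (F1 x - F2 x) * gaussian_wave t x \<partial>lborel)
        = (\<integral>\<xi>. F1 \<xi> * gaussian_wave t \<xi> \<partial>lborel) - (\<integral>\<xi>. F2 \<xi> * gaussian_wave t \<xi> \<partial>lborel)"
      using integrable_mult_L2[OF L(1) L2_gaussian_wave] integrable_mult_L2[OF L(2) L2_gaussian_wave]
      by (simp add: left_diff_distrib)
    then show "(\<integral>x. (F1 x - F2 x) * gaussian_wave t x \<partial>lborel) = 0"
      using is_FT_integral_mult[OF F1 integrable_gaussian_wave L2_gaussian_wave]
        is_FT_integral_mult[OF F2 integrable_gaussian_wave L2_gaussian_wave] by simp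
  qed
  then show ?thesis by simp
qed

lemma is_FT_AE_cong:
  assumes F: "is_FT f F" and ae: "AE x in lborel. F x = F' x" and m: "F' \<in> borel_measurable lborel"
  shows "is_FT f F'"
  unfolding is_FT_def
proof (intro conjI allI impI)
  have [measurable]: "F \<in> borel_measurable lborel" "F' \<in> borel_measurable lborel"
    using is_FT_L2[OF F] m by (auto simp: L2_def)
  show "L2 F'" by (rule L2_dominated[OF is_FT_L2[OF F] m, of 1]) (use ae in auto)
  fix \<phi> assume \<phi>: "integrable lborel \<phi> \<and> L2 \<phi>"
  then have [measurable]: "\<phi> \<in> borel_measurable lborel" by auto
  have "(\<integral>x. f x * FT1 \<phi> x \<partial>lborel) = (\<integral>\<xi>. F \<xi> * \<phi> \<xi> \<partial>lborel)"
    using is_FT_integral_mult[OF F] \<phi> by auto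
  also have "(\<integral>\<xi>. F \<xi> * \<phi> \<xi> \<partial>lborel) = (\<integral>\<xi>. F' \<xi> * \<phi> \<xi> \<partial>lborel)"
    by (rule integral_cong_AE) (use ae in auto)
  finally show "(\<integral>x. f x * FT1 \<phi> x \<partial>lborel) = (\<integral>\<xi>. F' \<xi> * \<phi> \<xi> \<partial>lborel)" .
qed

lemma is_FT_cmult:
  assumes F: "is_FT f F"
  shows "is_FT (\<lambda>x. c * f x) (\<lambda>x. c * F x)"
  unfolding is_FT_def
  using L2_cmult[OF is_FT_L2[OF F]] is_FT_integral_mult[OF F] by (simp add: mult.assoc)

lemma FT_is_FT:
  assumes L: "L2 f"
  shows "is_FT f (FT f)" "sqnorm (FT f) \<le> 2 * pi * sqnorm f"
proof -
  obtain F where F: "is_FT f F" and le: "sqnorm F \<le> 2 * pi * sqnorm f" using ex_is_FT[OF L] by blast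
  show FT: "is_FT f (FT f)" unfolding FT_def by (rule someI[where P="is_FT f", OF F])
  have "sqnorm (FT f) = sqnorm F"
    using is_FT_unique_AE[OF FT F] is_FT_L2[OF FT] is_FT_L2[OF F] by (intro sqnorm_cong_AE) (auto simp: L2_def)
  with le show "sqnorm (FT f) \<le> 2 * pi * sqnorm f" by simp
qed

lemma L2_FT: "L2 f \<Longrightarrow> L2 (FT f)"
  using FT_is_FT(1) by (rule is_FT_L2)

section \<open>Inversion and Plancherel's identity\<close>

lemma gaussian_quarter_integrable_L2:
  "integrable lborel (\<lambda>y. complex_of_real (exp (- (1/4) * (y - c)\<^sup>2)))"
  "L2 (\<lambda>y. complex_of_real (exp (- (1/4) * (y - c)\<^sup>2)))"
proof -
  show "integrable lborel (\<lambda>y. complex_of_real (exp (- (1/4) * (y - c)\<^sup>2)))"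
    using integrable_gaussian[of "1/4" c] by simp
  have "(\<lambda>y. (cmod (complex_of_real (exp (- (1/4) * (y - c)\<^sup>2))))\<^sup>2) = (\<lambda>y. exp (- (1/2) * (y - c)\<^sup>2))"
    by (rule ext) (simp add: power2_eq_square exp_add[symmetric])
  then show "L2 (\<lambda>y. complex_of_real (exp (- (1/4) * (y - c)\<^sup>2)))"
    using integrable_gaussian[of "1/2" c] by (simp add: L2_def)
qed

lemma FT1_gaussian_wave:
  "FT1 (gaussian_wave t) y = complex_of_real (sqrt pi) * complex_of_real (exp (- (1/4) * (y - t)\<^sup>2))"
proof -
  have "FT1 (gaussian_wave t) y = FT1 (\<lambda>x. complex_of_real (exp (- 1 * (x - 0)\<^sup>2))) (y - t)"
    unfolding FT1_def gaussian_wave_def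
  proof (rule Bochner_Integration.integral_cong[OF refl])
    fix x
    have "iexp (t * x) * exp (- \<i> * complex_of_real (x * y)) = exp (- \<i> * complex_of_real (x * (y - t)))"
      by (subst exp_add[symmetric]) (rule arg_cong[where f=exp], simp add: algebra_simps)
    then show "complex_of_real (exp (- x\<^sup>2)) * iexp (t * x) * exp (- \<i> * complex_of_real (x * y))
      = complex_of_real (exp (- 1 * (x - 0)\<^sup>2)) * exp (- \<i> * complex_of_real (x * (y - t)))"
      by (simp add: mult.assoc)
  qed
  also have "\<dots> = complex_of_real (sqrt pi * exp (- (y - t)\<^sup>2 / 4))"
    using FT1_gaussian[of 1 0 "y - t"] by simp
  finally show ?thesis by simp
qed

lemma FT1_gaussian_quarter:
  "FT1 (\<lambda>y. complex_of_real (exp (- (1/4) * (y - c)\<^sup>2))) z = complex_of_real (2 * sqrt pi) * gaussian_wave c (- z)"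
proof -
  have "FT1 (\<lambda>y. complex_of_real (exp (- (1/4) * (y - c)\<^sup>2))) z
      = exp (- \<i> * complex_of_real (z * c)) * complex_of_real (sqrt (pi / (1/4)) * exp (- z\<^sup>2 / (4 * (1/4))))"
    by (rule FT1_gaussian) simp
  also have "sqrt (pi / (1/4)) = 2 * sqrt pi"
    by (simp add: real_sqrt_mult)
  finally show ?thesis by (simp add: gaussian_wave_def mult_ac)
qed

lemma integral_reflect_lborel:
  fixes f :: "real \<Rightarrow> 'a::{banach, second_countable_topology}"
  shows "(\<integral>x. f (- x) \<partial>lborel) = (\<integral>x. f x \<partial>lborel)"
  using lborel_integral_real_affine[of "-1" f 0] by simp

lemma L2_reflect:
  assumes "L2 f" shows "L2 (\<lambda>x. f (- x))" "sqnorm (\<lambda>x. f (- x)) = sqnorm f"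
proof -
  have [measurable]: "f \<in> borel_measurable lborel" using assms by (simp add: L2_def)
  show "L2 (\<lambda>x. f (- x))"
    using L2_integrable_square[OF assms] lborel_integrable_real_affine_iff[of "-1" "\<lambda>x. (cmod (f x))\<^sup>2" 0]
    by (simp add: L2_def)
  show "sqnorm (\<lambda>x. f (- x)) = sqnorm f"
    unfolding sqnorm_def by (rule integral_reflect_lborel[of "\<lambda>x. (cmod (f x))\<^sup>2"])
qed

text \<open>Tested against a Gaussian wave, applying the transform twice moves the wave through the
  Gaussian of width \<open>1/4\<close> and back, picking up the factor \<open>\<surd>\<pi> \<cdot> 2\<surd>\<pi> = 2\<pi>\<close> and a reflection.\<close>

lemma integral_FT_FT_mult_gaussian_wave:
  assumes L: "L2 u"
  shows "(\<integral>x. FT (FT u) x * gaussian_wave t x \<partial>lborel)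
       = complex_of_real (2 * pi) * (\<integral>x. u (- x) * gaussian_wave t x \<partial>lborel)"
proof -
  define \<gamma> where "\<gamma> = (\<lambda>y. complex_of_real (exp (- (1/4) * (y - t)\<^sup>2)))"
  have \<gamma>: "integrable lborel \<gamma>" "L2 \<gamma>" unfolding \<gamma>_def by (rule gaussian_quarter_integrable_L2)+
  have "(\<integral>x. FT (FT u) x * gaussian_wave t x \<partial>lborel) = (\<integral>x. FT u x * FT1 (gaussian_wave t) x \<partial>lborel)"
    by (rule is_FT_integral_mult[OF FT_is_FT(1)[OF L2_FT[OF L]] integrable_gaussian_wave L2_gaussian_wave, symmetric])
  also have "\<dots> = (\<integral>x. complex_of_real (sqrt pi) * (FT u x * \<gamma> x) \<partial>lborel)"
    by (simp add: FT1_gaussian_wave \<gamma>_def mult_ac)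
  also have "\<dots> = complex_of_real (sqrt pi) * (\<integral>x. FT u x * \<gamma> x \<partial>lborel)"
    by (rule integral_mult_right_zero)
  also have "(\<integral>x. FT u x * \<gamma> x \<partial>lborel) = (\<integral>x. u x * FT1 \<gamma> x \<partial>lborel)"
    by (rule is_FT_integral_mult[OF FT_is_FT(1)[OF L] \<gamma>, symmetric])
  also have "\<dots> = (\<integral>x. complex_of_real (2 * sqrt pi) * (u x * gaussian_wave t (- x)) \<partial>lborel)"
    unfolding \<gamma>_def FT1_gaussian_quarter by (simp add: mult_ac)
  also have "\<dots> = complex_of_real (2 * sqrt pi) * (\<integral>x. u x * gaussian_wave t (- x) \<partial>lborel)"
    by (rule integral_mult_right_zero)
  also have "(\<integral>x. u x * gaussian_wave t (- x) \<partial>lborel) = (\<integral>x. u (- x) * gaussian_wave t x \<partial>lborel)"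
    using integral_reflect_lborel[of "\<lambda>x. u (- x) * gaussian_wave t x"] by simp
  finally show ?thesis by (simp add: mult.assoc flip: of_real_mult)
qed

lemma FT_FT_AE:
  assumes L: "L2 u"
  shows "AE x in lborel. FT (FT u) x = complex_of_real (2 * pi) * u (- x)"
proof -
  have VL: "L2 (FT (FT u))" and RL: "L2 (\<lambda>x. u (- x))" by (intro L2_FT L L2_reflect(1))+
  have "AE x in lborel. FT (FT u) x - complex_of_real (2 * pi) * u (- x) = 0"
  proof (rule AE_zero_if_orthogonal_gaussian_waves)
    show "L2 (\<lambda>x. FT (FT u) x - complex_of_real (2 * pi) * u (- x))" by (intro L2_diff VL L2_cmult RL)
    fix t
    show "(\<integral>x. (FT (FT u) x - complex_of_real (2 * pi) * u (- x)) * gaussian_wave t x \<partial>lborel) = 0"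
      using integrable_mult_L2[OF VL L2_gaussian_wave] integrable_mult_L2[OF RL L2_gaussian_wave]
        integral_FT_FT_mult_gaussian_wave[OF L, of t]
      by (simp add: left_diff_distrib mult.assoc)
  qed
  then show ?thesis by simp
qed

theorem Plancherel:
  assumes L: "L2 f"
  shows "sqnorm (FT f) = 2 * pi * sqnorm f"
proof (rule antisym)
  show "sqnorm (FT f) \<le> 2 * pi * sqnorm f" by (rule FT_is_FT(2)[OF L])
  have "sqnorm (FT (FT f)) = sqnorm (\<lambda>x. complex_of_real (2 * pi) * f (- x))"
    by (intro sqnorm_cong_AE FT_FT_AE L L2_measurable L2_FT L2_cmult L2_reflect(1))
  also have "\<dots> = (2 * pi)\<^sup>2 * sqnorm f"
    by (simp add: sqnorm_cmult L2_reflect(2)[OF L])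
  finally have "(2 * pi)\<^sup>2 * sqnorm f \<le> 2 * pi * sqnorm (FT f)"
    using FT_is_FT(2)[OF L2_FT[OF L]] by simp
  then show "2 * pi * sqnorm f \<le> sqnorm (FT f)"
    by (simp add: power2_eq_square)
qed

lemma ex_is_FT_preimage:
  assumes L: "L2 G"
  shows "\<exists>g. L2 g \<and> is_FT g G"
proof -
  define W where "W = FT (\<lambda>x. G (- x))"
  have RL: "L2 (\<lambda>x. G (- x))" by (rule L2_reflect(1)[OF L])
  have "is_FT (\<lambda>x. complex_of_real (1 / (2 * pi)) * W x) (\<lambda>x. complex_of_real (1 / (2 * pi)) * FT W x)"
    unfolding W_def by (rule is_FT_cmult[OF FT_is_FT(1)[OF L2_FT[OF RL]]])
  moreover have "AE x in lborel. complex_of_real (1 / (2 * pi)) * FT W x = G x"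
    using FT_FT_AE[OF RL] unfolding W_def[symmetric] by eventually_elim simp
  ultimately have "is_FT (\<lambda>x. complex_of_real (1 / (2 * pi)) * W x) G"
    by (rule is_FT_AE_cong) (use L in \<open>simp add: L2_def\<close>)
  moreover have "L2 (\<lambda>x. complex_of_real (1 / (2 * pi)) * W x)"
    unfolding W_def by (intro L2_cmult L2_FT RL)
  ultimately show ?thesis by blast
qed

section \<open>Fourier multipliers\<close>

lemma fmult_is_FT:
  assumes "L2 (\<lambda>\<xi>. m \<xi> * FT f \<xi>)"
  shows "L2 (fmult m f)" "is_FT (fmult m f) (\<lambda>\<xi>. m \<xi> * FT f \<xi>)"
proof -
  obtain g where "L2 g \<and> is_FT g (\<lambda>\<xi>. m \<xi> * FT f \<xi>)" using ex_is_FT_preimage[OF assms] by blast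
  then have "L2 (fmult m f) \<and> is_FT (fmult m f) (\<lambda>\<xi>. m \<xi> * FT f \<xi>)"
    unfolding fmult_def by (rule someI[where P="\<lambda>g. L2 g \<and> is_FT g (\<lambda>\<xi>. m \<xi> * FT f \<xi>)"])
  then show "L2 (fmult m f)" "is_FT (fmult m f) (\<lambda>\<xi>. m \<xi> * FT f \<xi>)" by auto
qed

lemma FT_fmult_AE:
  assumes "L2 (\<lambda>\<xi>. m \<xi> * FT f \<xi>)"
  shows "AE \<xi> in lborel. FT (fmult m f) \<xi> = m \<xi> * FT f \<xi>"
  using is_FT_unique_AE[OF FT_is_FT(1)[OF fmult_is_FT(1)[OF assms]] fmult_is_FT(2)[OF assms]] .

lemma sqnorm_fmult:
  assumes L: "L2 (\<lambda>\<xi>. m \<xi> * FT f \<xi>)"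
  shows "sqnorm (fmult m f) = sqnorm (\<lambda>\<xi>. m \<xi> * FT f \<xi>) / (2 * pi)"
proof -
  have "sqnorm (FT (fmult m f)) = sqnorm (\<lambda>\<xi>. m \<xi> * FT f \<xi>)"
    by (intro sqnorm_cong_AE FT_fmult_AE L L2_measurable L2_FT fmult_is_FT(1))
  then show ?thesis using Plancherel[OF fmult_is_FT(1)[OF L]] by (simp add: field_simps)
qed

lemma Hs_norm_fmult_square:
  assumes L: "L2 (\<lambda>\<xi>. m \<xi> * FT f \<xi>)"
  shows "(Hs_norm \<sigma> (fmult m f))\<^sup>2 = 1 / (2 * pi) * (\<integral>\<xi>. (1 + \<xi>\<^sup>2) powr \<sigma> * (cmod (m \<xi> * FT f \<xi>))\<^sup>2 \<partial>lborel)"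
proof -
  have [measurable]: "FT (fmult m f) \<in> borel_measurable lborel" "(\<lambda>\<xi>. m \<xi> * FT f \<xi>) \<in> borel_measurable lborel"
    using L2_FT[OF fmult_is_FT(1)[OF L]] L by (simp_all add: L2_def)
  have "(\<integral>\<xi>. (1 + \<xi>\<^sup>2) powr \<sigma> * (cmod (FT (fmult m f) \<xi>))\<^sup>2 \<partial>lborel)
      = (\<integral>\<xi>. (1 + \<xi>\<^sup>2) powr \<sigma> * (cmod (m \<xi> * FT f \<xi>))\<^sup>2 \<partial>lborel)"
    using FT_fmult_AE[OF L] by (intro integral_cong_AE) auto
  moreover have "(\<integral>\<xi>. (1 + \<xi>\<^sup>2) powr \<sigma> * (cmod (m \<xi> * FT f \<xi>))\<^sup>2 \<partial>lborel) \<ge> 0"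
    by (intro integral_nonneg_AE) auto
  ultimately show ?thesis by (simp add: Hs_norm_def)
qed

lemma integrable_weighted_multiplier:
  assumes f: "in_Hs s f" and [measurable]: "m \<in> borel_measurable borel"
    and le: "\<And>\<xi>. (1 + \<xi>\<^sup>2) powr \<sigma> * (cmod (m \<xi>))\<^sup>2 \<le> C * (1 + \<xi>\<^sup>2) powr s"
  shows "integrable lborel (\<lambda>\<xi>. (1 + \<xi>\<^sup>2) powr \<sigma> * (cmod (m \<xi> * FT f \<xi>))\<^sup>2)"
proof (rule Bochner_Integration.integrable_bound)
  have "L2 (FT f)" using f by (intro L2_FT) (simp add: in_Hs_def)
  then show "(\<lambda>\<xi>. (1 + \<xi>\<^sup>2) powr \<sigma> * (cmod (m \<xi> * FT f \<xi>))\<^sup>2) \<in> borel_measurable lborel" by measurable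
  show "integrable lborel (\<lambda>\<xi>. C * ((1 + \<xi>\<^sup>2) powr s * (cmod (FT f \<xi>))\<^sup>2))"
    using f by (simp add: in_Hs_def)
  show "AE \<xi> in lborel. norm ((1 + \<xi>\<^sup>2) powr \<sigma> * (cmod (m \<xi> * FT f \<xi>))\<^sup>2) \<le> norm (C * ((1 + \<xi>\<^sup>2) powr s * (cmod (FT f \<xi>))\<^sup>2))"
  proof (intro AE_I2)
    fix \<xi>
    have "(1 + \<xi>\<^sup>2) powr \<sigma> * (cmod (m \<xi> * FT f \<xi>))\<^sup>2 = ((1 + \<xi>\<^sup>2) powr \<sigma> * (cmod (m \<xi>))\<^sup>2) * (cmod (FT f \<xi>))\<^sup>2"
      by (simp add: norm_mult power_mult_distrib)
    also have "\<dots> \<le> C * (1 + \<xi>\<^sup>2) powr s * (cmod (FT f \<xi>))\<^sup>2" by (intro mult_right_mono le) simp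
    finally show "norm ((1 + \<xi>\<^sup>2) powr \<sigma> * (cmod (m \<xi> * FT f \<xi>))\<^sup>2) \<le> norm (C * ((1 + \<xi>\<^sup>2) powr s * (cmod (FT f \<xi>))\<^sup>2))"
      by (simp add: mult.assoc)
  qed
qed

lemma L2_multiplier:
  assumes f: "in_Hs s f" and m: "m \<in> borel_measurable borel"
    and le: "\<And>\<xi>. (cmod (m \<xi>))\<^sup>2 \<le> C * (1 + \<xi>\<^sup>2) powr s"
  shows "L2 (\<lambda>\<xi>. m \<xi> * FT f \<xi>)"
proof -
  have [measurable]: "m \<in> borel_measurable borel" by fact
  have "L2 (FT f)" using f by (intro L2_FT) (simp add: in_Hs_def)
  then have "(\<lambda>\<xi>. m \<xi> * FT f \<xi>) \<in> borel_measurable lborel" by measurable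
  moreover have one: "(1 + \<xi>\<^sup>2) powr 0 = 1" for \<xi> :: real
    using add_pos_nonneg[OF zero_less_one zero_le_power2[of \<xi>]] by simp
  have "integrable lborel (\<lambda>\<xi>. (1 + \<xi>\<^sup>2) powr 0 * (cmod (m \<xi> * FT f \<xi>))\<^sup>2)"
    by (rule integrable_weighted_multiplier[OF f m, of 0 C]) (unfold one, simp add: le)
  then have "integrable lborel (\<lambda>\<xi>. (cmod (m \<xi> * FT f \<xi>))\<^sup>2)"
    unfolding one by simp
  ultimately show ?thesis by (simp add: L2_def)
qed

section \<open>The symbols \<open>K\<^sup>-\<^sup>1\<close> and \<open>J\<^sup>\<sigma>\<close>\<close>

lemma tanh_le:
  fixes y :: real assumes y: "y \<ge> 0" shows "tanh y \<le> y"
proof -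
  have "(\<lambda>z. z - tanh z) 0 \<le> (\<lambda>z. z - tanh z) y"
  proof (rule DERIV_nonneg_imp_nondecreasing[OF y])
    fix x :: real
    have c: "cosh x \<noteq> 0" using cosh_real_pos[of x] by simp
    have "(tanh has_real_derivative 1 - tanh x ^ 2) (at x)"
      unfolding tanh_def[abs_def] using c
      by (auto intro!: derivative_eq_intros simp: power2_eq_square field_split_simps)
    then have "((\<lambda>z. z - tanh z) has_real_derivative (1 - (1 - tanh x ^ 2))) (at x)"
      by (intro derivative_intros) auto
    then show "\<exists>d. ((\<lambda>z. z - tanh z) has_real_derivative d) (at x) \<and> d \<ge> 0" by force
  qed
  then show ?thesis by simp
qed

lemma le_one_plus_mult_tanh:
  fixes y :: real assumes y: "y \<ge> 0" shows "y \<le> (1 + y) * tanh y"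
proof -
  define e where "e = exp (- 2 * y)"
  have e0: "e > 0" by (simp add: e_def)
  have "1 + 2 * y \<le> exp (2 * y)" using exp_ge_add_one_self[of "2*y"] by simp
  then have "e * (1 + 2 * y) \<le> e * exp (2 * y)" using e0 by (intro mult_left_mono) auto
  also have "e * exp (2 * y) = 1" by (simp add: e_def exp_add[symmetric])
  finally have key: "e * (1 + 2 * y) \<le> 1" .
  have t: "tanh y = (1 - e) / (1 + e)" by (simp add: tanh_real_altdef e_def)
  have "y * (1 + e) \<le> (1 + y) * (1 - e)" using key by (simp add: algebra_simps)
  then have "y \<le> (1 + y) * (1 - e) / (1 + e)" using e0 by (simp add: field_simps)
  then show ?thesis unfolding t by simp
qed

lemma norm_Kinv_symb_bounds:
  fixes \<xi> :: real
  shows "1 \<le> (cmod (Kinv_symb \<xi>))\<^sup>2" "(cmod (Kinv_symb \<xi>))\<^sup>2 \<le> 1 + \<bar>\<xi>\<bar>"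
proof -
  have "1 \<le> (cmod (Kinv_symb \<xi>))\<^sup>2 \<and> (cmod (Kinv_symb \<xi>))\<^sup>2 \<le> 1 + \<bar>\<xi>\<bar>"
  proof (cases "\<xi> = 0")
    case True then show ?thesis by (simp add: Kinv_symb_def K_symb_def)
  next
    case False
    define y where "y = \<bar>\<xi>\<bar>"
    have y: "y > 0" using False by (simp add: y_def)
    have ty: "tanh \<xi> / \<xi> = tanh y / y"
      using False by (cases "\<xi> > 0") (auto simp: y_def)
    have tp: "tanh y > 0" using y by simp
    have q: "(cmod (Kinv_symb \<xi>))\<^sup>2 = y / tanh y"
    proof -
      have "K_symb \<xi> = sqrt (tanh y / y)" using False ty by (simp add: K_symb_def)
      moreover have "tanh y / y > 0" using y tp by simp
      ultimately have "cmod (Kinv_symb \<xi>) = 1 / sqrt (tanh y / y)"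
        by (simp add: Kinv_symb_def norm_divide)
      then have "(cmod (Kinv_symb \<xi>))\<^sup>2 = 1 / (tanh y / y)"
        using \<open>tanh y / y > 0\<close> by (simp add: power_divide)
      then show ?thesis by simp
    qed
    have "tanh y \<le> y" using tanh_le[of y] y by simp
    then have a: "1 \<le> y / tanh y" using tp by simp
    have "y \<le> (1 + y) * tanh y" using le_one_plus_mult_tanh[of y] y by simp
    then have b: "y / tanh y \<le> 1 + y" using tp by (simp add: divide_le_eq)
    show ?thesis using a b q by (simp add: y_def)
  qed
  then show "1 \<le> (cmod (Kinv_symb \<xi>))\<^sup>2" "(cmod (Kinv_symb \<xi>))\<^sup>2 \<le> 1 + \<bar>\<xi>\<bar>" by auto
qed

lemma borel_measurable_tanh[measurable]: "(tanh :: real \<Rightarrow> real) \<in> borel_measurable borel"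
proof -
  have "continuous_on UNIV (\<lambda>x::real. tanh x)"
    by (intro continuous_intros) (use cosh_real_pos in force)
  then show ?thesis by (rule borel_measurable_continuous_onI)
qed

lemma borel_measurable_Kinv_symb[measurable]: "Kinv_symb \<in> borel_measurable borel"
  unfolding Kinv_symb_def[abs_def] K_symb_def[abs_def] by measurable

lemma borel_measurable_J_symb[measurable]: "J_symb a \<in> borel_measurable borel"
  unfolding J_symb_def[abs_def] by measurable

lemma norm_J_symb_square: "(cmod (J_symb a \<xi>))\<^sup>2 = (1 + \<xi>\<^sup>2) powr a"
proof -
  have "(cmod (J_symb a \<xi>))\<^sup>2 = ((1 + \<xi>\<^sup>2) powr (a/2))\<^sup>2" by (simp add: J_symb_def)
  also have "\<dots> = (1 + \<xi>\<^sup>2) powr (a/2 + a/2)" by (simp only: power2_eq_square powr_add)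
  finally show ?thesis by simp
qed

lemma one_plus_abs_le_sqrt: "1 + \<bar>\<xi>::real\<bar> \<le> 2 * (1 + \<xi>\<^sup>2) powr (1/2)"
proof -
  have "(1 + \<bar>\<xi>\<bar>)\<^sup>2 \<le> (2 * sqrt (1 + \<xi>\<^sup>2))\<^sup>2"
  proof -
    have "(1 + \<bar>\<xi>\<bar>)\<^sup>2 \<le> 2 * (1 + \<xi>\<^sup>2)" using mult_le_mean_squares[of 1 "\<bar>\<xi>\<bar>"] by (simp add: power2_sum)
    also have "\<dots> \<le> 4 * (1 + \<xi>\<^sup>2)" by simp
    also have "\<dots> = (2 * sqrt (1 + \<xi>\<^sup>2))\<^sup>2" by (simp add: power_mult_distrib)
    finally show ?thesis .
  qed
  then have "1 + \<bar>\<xi>\<bar> \<le> 2 * sqrt (1 + \<xi>\<^sup>2)" by (rule power2_le_imp_le) simp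
  then show ?thesis by (simp add: powr_half_sqrt)
qed

lemma norm_Kinv_symb_square_le: "(cmod (Kinv_symb \<xi>))\<^sup>2 \<le> 2 * (1 + \<xi>\<^sup>2) powr (1/2)"
  using norm_Kinv_symb_bounds(2) one_plus_abs_le_sqrt by (rule order_trans)

section \<open>The energy estimate\<close>

text \<open>The hypothesis \<open>s \<ge> 1/2\<close> is needed only to make \<open>K\<^sup>-\<^sup>1 f\<close>, a multiplier of order \<open>1/2\<close>,
  square integrable.\<close>

lemma sqnorm_fmult_J_le_Hs_norm_fmult_Kinv:
  assumes s: "s \<ge> 1/2" and f: "in_Hs s f"
  shows "L2 (fmult (J_symb (s - 1/2)) f)"
    and "sqnorm (fmult (J_symb (s - 1/2)) f) \<le> (Hs_norm (s - 1/2) (fmult Kinv_symb f))\<^sup>2"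
proof -
  have weight_le: "(1 + \<xi>\<^sup>2) powr (s - 1/2) \<le> (1 + \<xi>\<^sup>2) powr s" for \<xi> :: real
    by (rule powr_mono) auto
  have LJ: "L2 (\<lambda>\<xi>. J_symb (s - 1/2) \<xi> * FT f \<xi>)"
    by (rule L2_multiplier[OF f, of _ 1]) (auto simp: norm_J_symb_square weight_le)
  have K_weight: "(1 + \<xi>\<^sup>2) powr (s - 1/2) * (cmod (Kinv_symb \<xi>))\<^sup>2 \<le> 2 * (1 + \<xi>\<^sup>2) powr s" for \<xi> :: real
  proof -
    have "(1 + \<xi>\<^sup>2) powr (s - 1/2) * (cmod (Kinv_symb \<xi>))\<^sup>2 \<le> (1 + \<xi>\<^sup>2) powr (s - 1/2) * (2 * (1 + \<xi>\<^sup>2) powr (1/2))"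
      by (intro mult_left_mono norm_Kinv_symb_square_le) auto
    also have "\<dots> = 2 * (1 + \<xi>\<^sup>2) powr s" by (simp add: powr_add[symmetric])
    finally show ?thesis .
  qed
  have LK: "L2 (\<lambda>\<xi>. Kinv_symb \<xi> * FT f \<xi>)"
  proof (rule L2_multiplier[OF f, of _ 2])
    show "(cmod (Kinv_symb \<xi>))\<^sup>2 \<le> 2 * (1 + \<xi>\<^sup>2) powr s" for \<xi>
      using norm_Kinv_symb_square_le[of \<xi>] powr_mono[of "1/2" s "1 + \<xi>\<^sup>2"] s by simp
  qed measurable
  show "L2 (fmult (J_symb (s - 1/2)) f)" by (rule fmult_is_FT(1)[OF LJ])
  have "sqnorm (fmult (J_symb (s - 1/2)) f) = 1 / (2 * pi) * (\<integral>\<xi>. (1 + \<xi>\<^sup>2) powr (s - 1/2) * (cmod (1 * FT f \<xi>))\<^sup>2 \<partial>lborel)"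
    by (simp add: sqnorm_fmult[OF LJ] sqnorm_def[of "\<lambda>\<xi>. _ \<xi> * FT f \<xi>"] norm_mult power_mult_distrib norm_J_symb_square)
  also have "\<dots> \<le> 1 / (2 * pi) * (\<integral>\<xi>. (1 + \<xi>\<^sup>2) powr (s - 1/2) * (cmod (Kinv_symb \<xi> * FT f \<xi>))\<^sup>2 \<partial>lborel)"
  proof (rule mult_left_mono, rule integral_mono)
    show "integrable lborel (\<lambda>\<xi>. (1 + \<xi>\<^sup>2) powr (s - 1/2) * (cmod (1 * FT f \<xi>))\<^sup>2)"
      by (rule integrable_weighted_multiplier[OF f, of _ _ 1]) (auto simp: weight_le)
    show "integrable lborel (\<lambda>\<xi>. (1 + \<xi>\<^sup>2) powr (s - 1/2) * (cmod (Kinv_symb \<xi> * FT f \<xi>))\<^sup>2)"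
      by (rule integrable_weighted_multiplier[OF f _ K_weight]) measurable
    fix \<xi> :: real
    show "(1 + \<xi>\<^sup>2) powr (s - 1/2) * (cmod (1 * FT f \<xi>))\<^sup>2
        \<le> (1 + \<xi>\<^sup>2) powr (s - 1/2) * (cmod (Kinv_symb \<xi> * FT f \<xi>))\<^sup>2"
    proof -
      have "(cmod (FT f \<xi>))\<^sup>2 \<le> (cmod (Kinv_symb \<xi>))\<^sup>2 * (cmod (FT f \<xi>))\<^sup>2"
        using mult_right_mono[OF norm_Kinv_symb_bounds(1)[of \<xi>], of "(cmod (FT f \<xi>))\<^sup>2"] by simp
      then show ?thesis by (auto simp: norm_mult power_mult_distrib intro!: mult_left_mono)
    qed
  qed simp
  also have "\<dots> = (Hs_norm (s - 1/2) (fmult Kinv_symb f))\<^sup>2"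
    by (rule Hs_norm_fmult_square[OF LK, symmetric])
  finally show "sqnorm (fmult (J_symb (s - 1/2)) f) \<le> (Hs_norm (s - 1/2) (fmult Kinv_symb f))\<^sup>2" .
qed

lemma integral_Re_square_le_sqnorm:
  assumes L: "L2 g"
  shows "integrable lborel (\<lambda>x. (Re (g x))\<^sup>2)" and "(\<integral>x. (Re (g x))\<^sup>2 \<partial>lborel) \<le> sqnorm g"
proof -
  have [measurable]: "g \<in> borel_measurable lborel" using L by (simp add: L2_def)
  have le: "(Re (g x))\<^sup>2 \<le> (cmod (g x))\<^sup>2" for x
    using abs_Re_le_cmod[of "g x"] by (metis abs_ge_zero power2_abs power_mono)
  show int: "integrable lborel (\<lambda>x. (Re (g x))\<^sup>2)"
    by (rule Bochner_Integration.integrable_bound[OF L2_integrable_square[OF L]]) (auto simp: le)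
  show "(\<integral>x. (Re (g x))\<^sup>2 \<partial>lborel) \<le> sqnorm g"
    unfolding sqnorm_def by (rule integral_mono[OF int L2_integrable_square[OF L] le])
qed

lemma borel_measurable_if_L2_cx:
  assumes "L2 (cx u)" shows "u \<in> borel_measurable lborel"
proof -
  have "(\<lambda>x. Re (cx u x)) \<in> borel_measurable lborel" using assms by measurable
  then show ?thesis by (simp add: cx_def)
qed

lemma integral_weighted_bounds:
  fixes w u :: "real \<Rightarrow> real"
  assumes u: "integrable lborel u" "\<And>x. u x \<ge> 0"
    and w: "w \<in> borel_measurable lborel" "\<And>x. a \<le> w x" "\<And>x. w x \<le> b"
  shows "a * (\<integral>x. u x \<partial>lborel) \<le> (\<integral>x. w x * u x \<partial>lborel)"
    and "(\<integral>x. w x * u x \<partial>lborel) \<le> b * (\<integral>x. u x \<partial>lborel)"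
proof -
  have [measurable]: "u \<in> borel_measurable lborel" using u by auto
  have wu: "integrable lborel (\<lambda>x. w x * u x)"
  proof (rule Bochner_Integration.integrable_bound[of _ "\<lambda>x. (\<bar>a\<bar> + \<bar>b\<bar>) * u x"])
    show "integrable lborel (\<lambda>x. (\<bar>a\<bar> + \<bar>b\<bar>) * u x)" using u by simp
    show "(\<lambda>x. w x * u x) \<in> borel_measurable lborel" using w(1) by measurable
    show "AE x in lborel. norm (w x * u x) \<le> norm ((\<bar>a\<bar> + \<bar>b\<bar>) * u x)"
    proof (intro AE_I2)
      fix x
      have "\<bar>w x\<bar> \<le> \<bar>a\<bar> + \<bar>b\<bar>" using w(2,3)[of x] by linarith
      then show "norm (w x * u x) \<le> norm ((\<bar>a\<bar> + \<bar>b\<bar>) * u x)"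
        using u(2)[of x] by (simp add: abs_mult mult_right_mono)
    qed
  qed
  show "a * (\<integral>x. u x \<partial>lborel) \<le> (\<integral>x. w x * u x \<partial>lborel)"
    using integral_mono[OF _ wu, of "\<lambda>x. a * u x"] u w(2) by (simp add: mult_right_mono)
  show "(\<integral>x. w x * u x \<partial>lborel) \<le> b * (\<integral>x. u x \<partial>lborel)"
    using integral_mono[OF wu, of "\<lambda>x. b * u x"] u w(3) by (simp add: mult_right_mono)
qed

lemma half_sum_bounds:
  fixes N R I h H :: real
  assumes R: "0 \<le> R" "R \<le> N" and I: "(h - 1) * R \<le> I" "I \<le> H * R" and H: "0 \<le> H"
  shows "min h 1 / 2 * N \<le> N / 2 + I / 2" and "N / 2 + I / 2 \<le> (1 + H) / 2 * N"
proof -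
  show "min h 1 / 2 * N \<le> N / 2 + I / 2"
  proof (cases "h \<le> 1")
    case True
    then have "(h - 1) * N \<le> (h - 1) * R" using R by (intro mult_left_mono_neg) auto
    then show ?thesis using True I(1) by (simp add: algebra_simps)
  next
    case False
    then have "0 \<le> (h - 1) * R" using R(1) by simp
    then have "0 \<le> I" using I(1) by linarith
    then show ?thesis using False R by simp
  qed
  have "H * R \<le> H * N" using H R by (intro mult_left_mono)
  then show "N / 2 + I / 2 \<le> (1 + H) / 2 * N" using I(2) by (simp add: algebra_simps)
qed

lemma energy_equivalence:
  assumes s: "s \<ge> 1/2" and \<kappa>: "\<kappa> > 0" and v: "in_Hs s (cx v)"
    and \<eta>_meas: "\<eta> \<in> borel_measurable lborel" and \<eta>_bounds: "\<And>x. h - 1 \<le> \<eta> x \<and> \<eta> x \<le> H" and H: "H \<ge> 0"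
  shows "min h 1 / 2 * energy_norm2 s \<kappa> \<eta> v \<le> Es s \<kappa> \<eta> v"
    and "Es s \<kappa> \<eta> v \<le> (1 + H) / 2 * energy_norm2 s \<kappa> \<eta> v"
proof -
  define g where "g = fmult (J_symb (s - 1/2)) (cx v)"
  define R where "R = (\<integral>x. (Re (g x))\<^sup>2 \<partial>lborel)"
  have g: "L2 g" "sqnorm g \<le> (Hs_norm (s - 1/2) (fmult Kinv_symb (cx v)))\<^sup>2"
    unfolding g_def by (rule sqnorm_fmult_J_le_Hs_norm_fmult_Kinv[OF s v])+
  have "R \<le> energy_norm2 s \<kappa> \<eta> v"
    using integral_Re_square_le_sqnorm(2)[OF g(1)] g(2)
      mult_nonneg_nonneg[OF less_imp_le[OF \<kappa>] zero_le_power2[of "Hs_norm (s - 1/2) (fmult dx_symb (cx \<eta>))"]]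
      zero_le_power2[of "Hs_norm (s - 1/2) (cx \<eta>)"]
    unfolding energy_norm2_def R_def by linarith
  moreover have "(h - 1) * R \<le> (\<integral>x. \<eta> x * (Re (g x))\<^sup>2 \<partial>lborel)"
    and "(\<integral>x. \<eta> x * (Re (g x))\<^sup>2 \<partial>lborel) \<le> H * R"
    using integral_weighted_bounds[OF integral_Re_square_le_sqnorm(1)[OF g(1)] _ \<eta>_meas, of "h - 1" H]
      \<eta>_bounds unfolding R_def by auto
  moreover have "R \<ge> 0" unfolding R_def by (intro integral_nonneg_AE) auto
  ultimately show "min h 1 / 2 * energy_norm2 s \<kappa> \<eta> v \<le> Es s \<kappa> \<eta> v"
    and "Es s \<kappa> \<eta> v \<le> (1 + H) / 2 * energy_norm2 s \<kappa> \<eta> v"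
    using half_sum_bounds[of R] H by (simp_all add: Es_def g_def)
qed

theorem lemma3p2:
  fixes s \<kappa> T :: real and \<eta> v :: "real \<Rightarrow> real \<Rightarrow> real"
  assumes "s \<ge> 1/2" and "\<kappa> > 0" and "T > 0"
    and "ww_solution s \<kappa> T \<eta> v"
    and "\<exists>h H. h > 0 \<and> H > 0 \<and> (\<forall>t\<in>{0..T}. \<forall>x. h - 1 \<le> \<eta> t x \<and> \<eta> t x \<le> H)"
  shows "\<exists>c C. c > 0 \<and> C > 0 \<and> (\<forall>t\<in>{0..T}.
           c * energy_norm2 s \<kappa> (\<eta> t) (v t) \<le> Es s \<kappa> (\<eta> t) (v t) \<and>
           Es s \<kappa> (\<eta> t) (v t) \<le> C * energy_norm2 s \<kappa> (\<eta> t) (v t))"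
proof -
  obtain h H where h: "h > 0" and H: "H > 0"
    and \<eta>_bounds: "\<And>t x. t \<in> {0..T} \<Longrightarrow> h - 1 \<le> \<eta> t x \<and> \<eta> t x \<le> H"
    using assms(5) by blast
  have "min h 1 / 2 * energy_norm2 s \<kappa> (\<eta> t) (v t) \<le> Es s \<kappa> (\<eta> t) (v t)
      \<and> Es s \<kappa> (\<eta> t) (v t) \<le> (1 + H) / 2 * energy_norm2 s \<kappa> (\<eta> t) (v t)" if t: "t \<in> {0..T}" for t
  proof -
    have v: "in_Hs s (cx (v t))" and \<eta>: "in_Hs (s + 1/2) (cx (\<eta> t))"
      using assms(4) t by (auto simp: ww_solution_def cont_Hs_def)
    have "\<eta> t \<in> borel_measurable lborel"
      using \<eta> by (intro borel_measurable_if_L2_cx) (simp add: in_Hs_def)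
    then show ?thesis
      using energy_equivalence[OF assms(1,2) v _ \<eta>_bounds[OF t]] H by simp
  qed
  then show ?thesis using h H by (intro exI[of _ "min h 1 / 2"] exI[of _ "(1 + H) / 2"]) auto
qed

end
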